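(* Let $e(x)\in\boldsymbol{k}\{\{x\}\}$ be a normalized base for logarithms. Then in $\boldsymbol{k}\{\{x,y\}\}$, $$\log_e(e(x)e(y))=x+(\tau^{e(x)})^{-1}(y)+O(y^2),$$ where $O(y^2)$ denotes a series all of whose terms have degree at least $2$ in $y$.
   Context: $\boldsymbol{k}$ is a field of characteristic zero; $\boldsymbol{k}\{\{X\}\}$ is the unital algebra of formal power series in non-associative variables $X$. $\Delta,\epsilon$ are the continuous unital algebra homomorphisms with each variable $v$ primitive ($\Delta(v)=v\otimes1+1\otimes v$, $\epsilon(v)=0$); Sweedler notation $\Delta(u)=\sum u_{(1)}\otimes u_{(2)}$; left division $\backslash$ is the unique bilinear operation with $\sum u_{(1)}\backslash(u_{(2)}v)=\epsilon(u)v=\sum u_{(1)}(u_{(2)}\backslash v)$. A base for logarithms is a group-like $e(x)\in\boldsymbol{k}\{\{x\}\}$ ($\Delta e=e\otimes e$, $\epsilon(e)=1$) whose degree-one component is nonzero; it is normalized if its degree-one component equals $x$. $\log_e$ is the inverse of the bijection $u\mapsto e(u)$ from series with zero constant term to series with constant term $1$. $\tau^{e(x)}(y):=e(x)\backslash\left.\frac{d}{ds}\right|_{s=0}e(x+sy)\in\boldsymbol{k}\{\{x,y\}\}$, and $(\tau^{e(x)})^{-1}(y)$ is the series in $\boldsymbol{k}\{\{x,y\}\}$ with $(\tau^{e(x)})^{-1}(\tau^{e(x)}(y))=y$ (substitution in $y$). *)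

theory Defs
  imports Main
begin

text \<open>Non-empty non-associative monomials in variables of type 'v are binary trees
with leaves labelled by variables; a monomial (including the empty word 1) is
an option of such a tree, None being the unit 1.\<close>

datatype 'v ntree = MLeaf 'v | MNode "'v ntree" "'v ntree"

type_synonym 'v mon = "'v ntree option"

fun tdeg :: "'v ntree \<Rightarrow> nat" where
  "tdeg (MLeaf v) = 1"
| "tdeg (MNode a b) = tdeg a + tdeg b"

definition deg :: "'v mon \<Rightarrow> nat" where
  "deg m = (case m of None \<Rightarrow> 0 | Some t \<Rightarrow> tdeg t)"

fun mmul :: "'v mon \<Rightarrow> 'v mon \<Rightarrow> 'v mon" where
  "mmul None w = w"
| "mmul (Some a) None = Some a"
| "mmul (Some a) (Some b) = Some (MNode a b)"

text \<open>Formal power series k{{X}}: arbitrary coefficient functions on monomials.\<close>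
type_synonym ('v, 'a) ser = "'v mon \<Rightarrow> 'a"

definition mon :: "'v mon \<Rightarrow> ('v, 'a::zero_neq_one) ser" where
  "mon m = (\<lambda>w. if w = m then 1 else 0)"

definition var :: "'v \<Rightarrow> ('v, 'a::zero_neq_one) ser" where
  "var v = mon (Some (MLeaf v))"

definition ser_mult :: "('v, 'a::comm_ring_1) ser \<Rightarrow> ('v, 'a) ser \<Rightarrow> ('v, 'a) ser" where
  "ser_mult f g = (\<lambda>w. \<Sum>(u, v) \<in> {(u, v). mmul u v = w}. f u * g v)"

definition ser_scale :: "'a::comm_ring_1 \<Rightarrow> ('v, 'a) ser \<Rightarrow> ('v, 'a) ser" where
  "ser_scale c f = (\<lambda>w. c * f w)"

fun eval_tree :: "('v \<Rightarrow> ('w, 'a::comm_ring_1) ser) \<Rightarrow> 'v ntree \<Rightarrow> ('w, 'a) ser" where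
  "eval_tree \<sigma> (MLeaf v) = \<sigma> v"
| "eval_tree \<sigma> (MNode a b) = ser_mult (eval_tree \<sigma> a) (eval_tree \<sigma> b)"

definition eval_mon :: "('v \<Rightarrow> ('w, 'a::comm_ring_1) ser) \<Rightarrow> 'v mon \<Rightarrow> ('w, 'a) ser" where
  "eval_mon \<sigma> m = (case m of None \<Rightarrow> mon None | Some t \<Rightarrow> eval_tree \<sigma> t)"

text \<open>Substitution of series with zero constant term for the (finitely many)
variables: f(\<sigma>) = \<Sum>_m f_m m(\<sigma>), where only monomials m with deg m \<le> deg w
contribute to the coefficient of w (each \<sigma> v has zero constant term).\<close>
definition subst :: "('v::finite \<Rightarrow> ('w, 'a::comm_ring_1) ser) \<Rightarrow> ('v, 'a) ser \<Rightarrow> ('w, 'a) ser" where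
  "subst \<sigma> f = (\<lambda>w. \<Sum>m \<in> {m. deg m \<le> deg w}. f m * eval_mon \<sigma> m w)"

text \<open>Completed tensor product k{{X}} \<otimes> k{{X}}: coefficient functions on pairs.\<close>
type_synonym ('v, 'a) tser = "'v mon \<times> 'v mon \<Rightarrow> 'a"

definition tmon :: "'v mon \<Rightarrow> 'v mon \<Rightarrow> ('v, 'a::zero_neq_one) tser" where
  "tmon a b = (\<lambda>p. if p = (a, b) then 1 else 0)"

definition tensor :: "('v, 'a::comm_ring_1) ser \<Rightarrow> ('v, 'a) ser \<Rightarrow> ('v, 'a) tser" where
  "tensor f g = (\<lambda>(a, b). f a * g b)"

definition tmult :: "('v, 'a::comm_ring_1) tser \<Rightarrow> ('v, 'a) tser \<Rightarrow> ('v, 'a) tser" where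
  "tmult F G = (\<lambda>(a, b). \<Sum>((a1, a2), (b1, b2)) \<in> {(a1, a2). mmul a1 a2 = a} \<times> {(b1, b2). mmul b1 b2 = b}.
      F (a1, b1) * G (a2, b2))"

text \<open>The coproduct on monomials: the unital algebra homomorphism with each
variable primitive.\<close>
fun coprod_tree :: "'v ntree \<Rightarrow> ('v, 'a::comm_ring_1) tser" where
  "coprod_tree (MLeaf v) = (\<lambda>p. tmon (Some (MLeaf v)) None p + tmon None (Some (MLeaf v)) p)"
| "coprod_tree (MNode a b) = tmult (coprod_tree a) (coprod_tree b)"

definition coprod_mon :: "'v mon \<Rightarrow> ('v, 'a::comm_ring_1) tser" where
  "coprod_mon m = (case m of None \<Rightarrow> tmon None None | Some t \<Rightarrow> coprod_tree t)"

text \<open>Continuous extension to series (coprod_mon w is homogeneous of degree deg w).\<close>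
definition coprod :: "('v::finite, 'a::comm_ring_1) ser \<Rightarrow> ('v, 'a) tser" where
  "coprod f = (\<lambda>(a, b). \<Sum>w \<in> {w. deg w = deg a + deg b}. f w * coprod_mon w (a, b))"

text \<open>Counit: the unital algebra homomorphism killing all variables = constant term.\<close>
definition counit :: "('v, 'a) ser \<Rightarrow> 'a" where
  "counit f = f None"

definition ldiv_ok :: "('v::finite mon \<Rightarrow> 'v mon \<Rightarrow> ('v, 'a::comm_ring_1) ser) \<Rightarrow> bool" where
  "ldiv_ok D \<longleftrightarrow>
     (\<forall>u v. (\<lambda>w. \<Sum>(a, b) \<in> {(a, b). deg a + deg b = deg u}.
                 coprod_mon u (a, b) * D a (mmul b v) w)
            = ser_scale (counit (mon u)) (mon v)) \<and>
     (\<forall>u v. (\<lambda>w. \<Sum>(a, b) \<in> {(a, b). deg a + deg b = deg u}.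
                 coprod_mon u (a, b) * ser_mult (mon a) (D b v) w)
            = ser_scale (counit (mon u)) (mon v))"

definition ldiv_mon :: "'v::finite mon \<Rightarrow> 'v mon \<Rightarrow> ('v, 'a::comm_ring_1) ser" where
  "ldiv_mon = (THE D. ldiv_ok D)"

text \<open>Continuous bilinear extension to series (u \ v is homogeneous of degree
deg u + deg v).\<close>
definition ldiv :: "('v::finite, 'a::comm_ring_1) ser \<Rightarrow> ('v, 'a) ser \<Rightarrow> ('v, 'a) ser" where
  "ldiv f g = (\<lambda>w. \<Sum>(u, v) \<in> {(u, v). deg u + deg v = deg w}. f u * g v * ldiv_mon u v w)"

definition group_like :: "('v::finite, 'a::comm_ring_1) ser \<Rightarrow> bool" where
  "group_like e \<longleftrightarrow> coprod e = tensor e e \<and> counit e = 1"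

text \<open>Series in one variable x are series over the variable type unit.\<close>
definition base_for_logs :: "(unit, 'a::comm_ring_1) ser \<Rightarrow> bool" where
  "base_for_logs e \<longleftrightarrow> group_like e \<and> (\<exists>m. deg m = 1 \<and> e m \<noteq> 0)"

definition normalized_base :: "(unit, 'a::comm_ring_1) ser \<Rightarrow> bool" where
  "normalized_base e \<longleftrightarrow> base_for_logs e \<and> (\<forall>m. deg m = 1 \<longrightarrow> e m = var () m)"

text \<open>e(u) for a series u with zero constant term.\<close>
definition apply_base :: "(unit, 'a::comm_ring_1) ser \<Rightarrow> ('w, 'a) ser \<Rightarrow> ('w, 'a) ser" where
  "apply_base e u = subst (\<lambda>_. u) e"

definition log_base :: "(unit, 'a::comm_ring_1) ser \<Rightarrow> ('w, 'a) ser \<Rightarrow> ('w, 'a) ser" where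
  "log_base e f = (THE u. u None = 0 \<and> apply_base e u = f)"

datatype xy = X | Y

instance xy :: finite
proof
  have "(UNIV :: xy set) = {X, Y}" using xy.exhaust by blast
  then show "finite (UNIV :: xy set)" by (metis finite.emptyI finite.insertI)
qed

fun ydeg_tree :: "xy ntree \<Rightarrow> nat" where
  "ydeg_tree (MLeaf v) = (if v = Y then 1 else 0)"
| "ydeg_tree (MNode a b) = ydeg_tree a + ydeg_tree b"

definition ydeg :: "xy mon \<Rightarrow> nat" where
  "ydeg m = (case m of None \<Rightarrow> 0 | Some t \<Rightarrow> ydeg_tree t)"

text \<open>d/ds at s = 0 of F(x + s y): the part of F(x+y) of degree exactly one in y.\<close>
definition ds_at0 :: "(xy, 'a::comm_ring_1) ser \<Rightarrow> (xy, 'a) ser" where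
  "ds_at0 F = (\<lambda>w. if ydeg w = 1 then F w else 0)"

definition tau :: "(unit, 'a::comm_ring_1) ser \<Rightarrow> (xy, 'a) ser" where
  "tau e = ldiv (apply_base e (var X)) (ds_at0 (apply_base e (\<lambda>w. var X w + var Y w)))"

text \<open>(\<tau>^{e(x)})^{-1}(y): the series T (with zero constant term, so that substitution
makes sense) such that substituting y := T in \<tau>^{e(x)}(y) yields y.\<close>
definition tau_inv :: "(unit, 'a::comm_ring_1) ser \<Rightarrow> (xy, 'a) ser" where
  "tau_inv e = (THE T. T None = 0 \<and>
      subst (\<lambda>v. if v = X then var X else T) (tau e) = var Y)"

definition O_y2 :: "(xy, 'a::zero) ser \<Rightarrow> bool" where
  "O_y2 R \<longleftrightarrow> (\<forall>w. ydeg w < 2 \<longrightarrow> R w = 0)"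

end

theory Submission
  imports Defs
begin

(*
  Put u = log_e(e(x) e(y)) and v = x + tau^-1(y). Both have zero constant term, and the
  coefficient of a monomial w in e(u) is u_w plus terms involving only coefficients of u on
  monomials of lower degree and no larger y-degree. Hence u and v agree in y-degree <= 1 as
  soon as e(u) and e(v) do.

  Modulo y^2 we have e(x) e(y) = e(x) (1 + y). On the other side, e(x + y) = e(x) + D modulo
  y^2, where D is the part of e(x + y) linear in y. Since e(x) is group-like, the defining
  identity of left division gives e(x) (e(x) \ D) = D, i.e. e(x) tau(y) = D. Substituting
  y := tau^-1(y), which has no terms free of y, therefore yields
  e(v) = e(x) + e(x) tau(tau^-1(y)) = e(x) + e(x) y modulo y^2.
*)

definition mons_le :: "nat \<Rightarrow> 'v mon set" where
  "mons_le n = {m. deg m \<le> n}"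

lemma mem_mons_le [simp]: "m \<in> mons_le n \<longleftrightarrow> deg m \<le> n"
  by (simp add: mons_le_def)

lemma tdeg_ge_1: "tdeg t \<ge> 1"
  by (induction t) auto

lemma deg_Some: "deg (Some t) = tdeg t"
  by (simp add: deg_def)

lemma deg_None [simp]: "deg None = 0"
  by (simp add: deg_def)

lemma deg_eq_0_iff: "deg m = 0 \<longleftrightarrow> m = None"
proof (cases m)
  case (Some t) then show ?thesis using tdeg_ge_1[of t] by (simp add: deg_def)
qed (simp add: deg_def)

lemma deg_mmul [simp]: "deg (mmul a b) = deg a + deg b"
  by (cases a; cases b) (auto simp: deg_def)

lemma mmul_None_right [simp]: "mmul a None = a"
  by (cases a) auto

lemma mmul_eq_None_iff: "mmul a b = None \<longleftrightarrow> a = None \<and> b = None"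
  by (cases a; cases b) auto

abbreviation leaf :: "'v \<Rightarrow> 'v mon" where
  "leaf v \<equiv> Some (MLeaf v)"

lemma deg_leaf [simp]: "deg (leaf v) = 1"
  by (simp add: deg_def)

lemma mon_cases: obtains "m = None" | v where "m = leaf v" | a b where "m = Some (MNode a b)"
proof (cases m)
  case (Some t) then show ?thesis using that by (cases t) auto
qed (use that in auto)

lemma finite_trees_tdeg_le: "finite {t :: 'v::finite ntree. tdeg t \<le> n}"
proof (induction n)
  case 0
  have "{t :: 'v ntree. tdeg t \<le> 0} = {}" using tdeg_ge_1 by (metis Collect_empty_eq le_zero_eq one_neq_zero)
  then show ?case by (metis finite.emptyI)
next
  case (Suc n)
  have "{t :: 'v ntree. tdeg t \<le> Suc n} \<subseteq>
      range MLeaf \<union> case_prod MNode ` ({t. tdeg t \<le> n} \<times> {t. tdeg t \<le> n})"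
  proof
    fix t :: "'v ntree" assume t: "t \<in> {t. tdeg t \<le> Suc n}"
    show "t \<in> range MLeaf \<union> case_prod MNode ` ({t. tdeg t \<le> n} \<times> {t. tdeg t \<le> n})"
    proof (cases t)
      case (MNode a b)
      then have "tdeg a \<le> n" "tdeg b \<le> n" using t tdeg_ge_1[of a] tdeg_ge_1[of b] by auto
      then show ?thesis using MNode by force
    qed auto
  qed
  then show ?case using Suc by (auto intro: finite_subset)
qed

lemma finite_mons_le [simp]: "finite (mons_le n :: 'v::finite mon set)"
proof -
  have "mons_le n \<subseteq> insert None (Some ` {t :: 'v ntree. tdeg t \<le> n})"
    by (auto simp: deg_def split: option.splits)
  then show ?thesis using finite_trees_tdeg_le finite_subset by blast
qed

lemma mons_le_0: "mons_le 0 = {None}"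
  by (auto simp: deg_eq_0_iff)

lemma sum_mons_le_cong:
  assumes "\<And>m. deg m > n \<Longrightarrow> f m = 0" and "\<And>m. deg m > k \<Longrightarrow> f m = 0"
  shows "(\<Sum>m\<in>mons_le k. f (m :: 'v::finite mon)) = (\<Sum>m\<in>mons_le n. f m)"
proof (cases "n \<le> k")
  case True
  then show ?thesis by (intro sum.mono_neutral_right) (use assms in auto)
next
  case False
  then show ?thesis by (intro sum.mono_neutral_left) (use assms in auto)
qed

lemma sum_delta_mult:
  "finite A \<Longrightarrow> (\<Sum>b\<in>A. (if b = u then 1 else 0) * f b) = (if u \<in> A then f u else (0::'a::semiring_1))"
  by (induction A rule: finite_induct) auto

definition factorizations :: "'v mon \<Rightarrow> ('v mon \<times> 'v mon) set" where
  "factorizations w = {(u, v). mmul u v = w}"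

lemma factorizations_None: "factorizations None = {(None, None)}"
  by (auto simp: factorizations_def mmul_eq_None_iff)

lemma factorizations_leaf: "factorizations (leaf v) = {(None, leaf v), (leaf v, None)}"
proof -
  have "mmul a b = leaf v \<longleftrightarrow> (a, b) = (None, leaf v) \<or> (a, b) = (leaf v, None)" for a b
    by (cases a; cases b) auto
  then show ?thesis by (auto simp: factorizations_def)
qed

lemma factorizations_node: "factorizations (Some (MNode s t)) =
    {(None, Some (MNode s t)), (Some (MNode s t), None), (Some s, Some t)}"
proof -
  have "mmul a b = Some (MNode s t) \<longleftrightarrow>
      (a, b) = (None, Some (MNode s t)) \<or> (a, b) = (Some (MNode s t), None) \<or> (a, b) = (Some s, Some t)" for a b
    by (cases a; cases b) auto
  then show ?thesis by (auto simp: factorizations_def)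
qed

lemma finite_factorizations [simp]: "finite (factorizations w)"
  by (cases w rule: mon_cases) (simp_all add: factorizations_None factorizations_leaf factorizations_node)

lemma deg_factorization: "(u, v) \<in> factorizations w \<Longrightarrow> deg u + deg v = deg w"
  by (auto simp: factorizations_def)

lemma sum_factorizations_delta:
  "(\<Sum>p\<in>factorizations w. if p = (x, y) then c else 0) = (if mmul x y = w then c else 0)"
  by (subst sum.delta[OF finite_factorizations]) (simp add: factorizations_def)

lemma sum_factorizations_reindex:
  assumes "\<And>x y. H x y \<noteq> 0 \<Longrightarrow> deg x \<le> n1 \<and> deg y \<le> n2 \<and> deg x + deg y \<le> N"
  shows "(\<Sum>w\<in>(mons_le N :: 'v::finite mon set). \<Sum>(x, y)\<in>factorizations w. H x y) =
    (\<Sum>x\<in>mons_le n1. \<Sum>y\<in>mons_le n2. (H x y :: 'a::comm_monoid_add))"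
proof -
  let ?S = "{p :: 'v mon \<times> 'v mon. deg (fst p) + deg (snd p) \<le> N}"
  let ?B = "mons_le n1 \<times> mons_le n2 :: ('v mon \<times> 'v mon) set"
  have "finite ?S"
    by (rule finite_subset[of _ "mons_le N \<times> mons_le N"]) auto
  have "(\<Sum>w\<in>mons_le N. \<Sum>(x, y)\<in>factorizations w. H x y) =
      (\<Sum>q\<in>Sigma (mons_le N) factorizations. case snd q of (x, y) \<Rightarrow> H x y)"
    by (subst sum.Sigma) (auto simp: case_prod_beta)
  also have "\<dots> = (\<Sum>p\<in>snd ` Sigma (mons_le N) factorizations. case p of (x, y) \<Rightarrow> H x y)"
    by (subst sum.reindex) (auto simp: inj_on_def factorizations_def)
  also have "snd ` Sigma (mons_le N) factorizations = ?S"
    by (auto simp: factorizations_def image_iff)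
  also have "(\<Sum>p\<in>?S. case p of (x, y) \<Rightarrow> H x y) = (\<Sum>p\<in>?S \<inter> ?B. case p of (x, y) \<Rightarrow> H x y)"
    by (rule sum.mono_neutral_right) (use \<open>finite ?S\<close> assms in auto)
  also have "\<dots> = (\<Sum>p\<in>?B. case p of (x, y) \<Rightarrow> H x y)"
    by (rule sum.mono_neutral_left) (use assms in auto)
  finally show ?thesis by (simp add: sum.cartesian_product)
qed

lemma var_None [simp]: "var v None = 0"
  by (simp add: var_def mon_def)

lemma ser_mult_factorizations: "ser_mult f g w = (\<Sum>(u, v)\<in>factorizations w. f u * g v)"
  by (simp add: ser_mult_def factorizations_def)

lemma ser_mult_None: "ser_mult f g None = f None * g None"
  by (simp add: ser_mult_factorizations factorizations_None)

lemma ser_mult_leaf: "ser_mult f g (leaf v) = f None * g (leaf v) + f (leaf v) * g None"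
  by (simp add: ser_mult_factorizations factorizations_leaf)

lemma ser_mult_node: "ser_mult f g (Some (MNode a b)) =
    f None * g (Some (MNode a b)) + f (Some (MNode a b)) * g None + f (Some a) * g (Some b)"
  by (simp add: ser_mult_factorizations factorizations_node)

lemma ser_mult_mon: "ser_mult (mon a) (mon b) = (mon (mmul a b) :: ('v, 'a::comm_ring_1) ser)"
proof
  fix w
  have "(ser_mult (mon a) (mon b) w :: 'a) = (\<Sum>p\<in>factorizations w. if p = (a, b) then 1 else 0)"
    unfolding ser_mult_factorizations mon_def by (intro sum.cong refl) (auto split: if_splits)
  then show "(ser_mult (mon a) (mon b) w :: 'a) = mon (mmul a b) w"
    by (simp add: sum_factorizations_delta mon_def eq_commute)
qed

lemma ser_mult_one_left [simp]: "ser_mult (mon None) g = g"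
proof
  fix w
  have "ser_mult (mon None) g w = (\<Sum>p\<in>factorizations w. if p = (None, w) then g w else 0)"
    unfolding ser_mult_factorizations mon_def by (rule sum.cong) (auto simp: factorizations_def split: if_splits)
  then show "ser_mult (mon None) g w = g w" by (simp add: sum_factorizations_delta)
qed

lemma ser_mult_one_right [simp]: "ser_mult f (mon None) = f"
proof
  fix w
  have "ser_mult f (mon None) w = (\<Sum>p\<in>factorizations w. if p = (w, None) then f w else 0)"
    unfolding ser_mult_factorizations mon_def by (rule sum.cong) (auto simp: factorizations_def split: if_splits)
  then show "ser_mult f (mon None) w = f w" by (simp add: sum_factorizations_delta)
qed

lemma ser_mult_zero_left [simp]: "ser_mult (\<lambda>_. 0) g = (\<lambda>_. 0)"
  by (simp add: ser_mult_factorizations fun_eq_iff)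

lemma ser_mult_zero_right [simp]: "ser_mult f (\<lambda>_. 0) = (\<lambda>_. 0)"
  by (simp add: ser_mult_factorizations fun_eq_iff)

lemma ser_mult_add_right: "ser_mult f (\<lambda>w. g w + h w) w = ser_mult f g w + ser_mult f h w"
  by (simp add: ser_mult_factorizations distrib_left sum.distrib case_prod_beta)

lemma ser_mult_sum_right:
  "ser_mult f (\<lambda>w. \<Sum>i\<in>I. c i * g i w) w0 = (\<Sum>i\<in>I. c i * ser_mult f (g i) w0)"
  unfolding ser_mult_factorizations
  by (simp add: sum_distrib_left sum_distrib_right case_prod_beta mult_ac sum.swap[of _ I])

lemma ser_mult_sum2_right: "ser_mult f (\<lambda>w. \<Sum>i\<in>I. \<Sum>j\<in>J. c i j * g i j w) w0 =
    (\<Sum>i\<in>I. \<Sum>j\<in>J. c i j * ser_mult f (g i j) w0)"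
  using ser_mult_sum_right[of f "\<lambda>_. 1" "\<lambda>i w. \<Sum>j\<in>J. c i j * g i j w" I w0]
  by (simp add: ser_mult_sum_right)

lemma left_cancel_ser_mult:
  assumes f1: "f None = 1" and h: "ser_mult f h = (\<lambda>_. 0)"
  shows "h w = (0 :: 'a::comm_ring_1)"
proof (induction "deg w" arbitrary: w rule: less_induct)
  case less
  have h0: "h None = 0" using fun_cong[OF h, of None] f1 by (simp add: ser_mult_None)
  show ?case
  proof (cases w rule: mon_cases)
    case 1 then show ?thesis using h0 by simp
  next
    case (2 v) then show ?thesis using fun_cong[OF h, of w] f1 h0 by (simp add: ser_mult_leaf)
  next
    case (3 a b)
    then have "h (Some b) = 0" using tdeg_ge_1[of a] by (intro less) (simp add: deg_def)
    then show ?thesis using fun_cong[OF h, of w] f1 h0 3 by (simp add: ser_mult_node)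
  qed
qed

section \<open>The coproduct on monomials\<close>

lemma sum_swap3: "(\<Sum>p\<in>A. \<Sum>q\<in>B. \<Sum>r\<in>C. F p q r) = (\<Sum>r\<in>C. \<Sum>q\<in>B. \<Sum>p\<in>A. F p q r)"
proof -
  have "(\<Sum>p\<in>A. \<Sum>q\<in>B. \<Sum>r\<in>C. F p q r) = (\<Sum>p\<in>A. \<Sum>r\<in>C. \<Sum>q\<in>B. F p q r)"
    by (rule sum.cong[OF refl], rule sum.swap)
  also have "\<dots> = (\<Sum>r\<in>C. \<Sum>p\<in>A. \<Sum>q\<in>B. F p q r)" by (rule sum.swap)
  also have "\<dots> = (\<Sum>r\<in>C. \<Sum>q\<in>B. \<Sum>p\<in>A. F p q r)" by (rule sum.cong[OF refl], rule sum.swap)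
  finally show ?thesis .
qed

lemma sum_rotate4:
  "(\<Sum>a\<in>A. \<Sum>b\<in>B. \<Sum>c\<in>C. \<Sum>d\<in>D. F a b c d) = (\<Sum>b\<in>B. \<Sum>c\<in>C. \<Sum>d\<in>D. \<Sum>a\<in>A. F a b c d)"
proof -
  have "(\<Sum>a\<in>A. \<Sum>b\<in>B. \<Sum>c\<in>C. \<Sum>d\<in>D. F a b c d) = (\<Sum>b\<in>B. \<Sum>a\<in>A. \<Sum>c\<in>C. \<Sum>d\<in>D. F a b c d)"
    by (rule sum.swap)
  also have "\<dots> = (\<Sum>b\<in>B. \<Sum>c\<in>C. \<Sum>a\<in>A. \<Sum>d\<in>D. F a b c d)"
    by (rule sum.cong[OF refl], rule sum.swap)
  also have "\<dots> = (\<Sum>b\<in>B. \<Sum>c\<in>C. \<Sum>d\<in>D. \<Sum>a\<in>A. F a b c d)"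
    by (rule sum.cong[OF refl], rule sum.cong[OF refl], rule sum.swap)
  finally show ?thesis .
qed

lemma tmult_factorizations: "tmult F G (a, b) =
    (\<Sum>p\<in>factorizations a. \<Sum>q\<in>factorizations b. F (fst p, fst q) * G (snd p, snd q))"
  unfolding tmult_def factorizations_def by (simp add: sum.cartesian_product case_prod_beta)

lemma coprod_mon_None: "coprod_mon None (a, b) = (if a = None \<and> b = None then 1 else 0)"
  by (simp add: coprod_mon_def tmon_def)

lemma coprod_mon_leaf: "coprod_mon (leaf v) (a, b) =
    (if a = leaf v \<and> b = None then 1 else 0) + (if a = None \<and> b = leaf v then 1 else 0)"
  by (simp add: coprod_mon_def tmon_def)

lemma coprod_mon_node: "coprod_mon (Some (MNode s t)) = tmult (coprod_mon (Some s)) (coprod_mon (Some t))"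
  by (simp add: coprod_mon_def)

lemma coprod_mon_tree_deg:
  "(coprod_mon (Some t) (a, b) :: 'a::comm_ring_1) \<noteq> 0 \<Longrightarrow> deg a + deg b = tdeg t"
proof (induction t arbitrary: a b)
  case (MLeaf v) then show ?case by (simp add: coprod_mon_leaf split: if_splits)
next
  case (MNode s t)
  from MNode.prems obtain p q where pq: "p \<in> factorizations a" "q \<in> factorizations b"
    and nz: "coprod_mon (Some s) (fst p, fst q) * coprod_mon (Some t) (snd p, snd q) \<noteq> (0::'a)"
    unfolding coprod_mon_node tmult_factorizations by (meson sum.not_neutral_contains_not_neutral)
  then have "coprod_mon (Some s) (fst p, fst q) \<noteq> (0::'a)" "coprod_mon (Some t) (snd p, snd q) \<noteq> (0::'a)"
    by auto
  then have "deg (fst p) + deg (fst q) = tdeg s" "deg (snd p) + deg (snd q) = tdeg t"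
    by (simp_all add: MNode.IH)
  then show ?case using pq by (cases p, cases q) (auto simp: factorizations_def)
qed

lemma coprod_mon_deg: "(coprod_mon u (a, b) :: 'a::comm_ring_1) \<noteq> 0 \<Longrightarrow> deg a + deg b = deg u"
  using coprod_mon_tree_deg[of _ a b, where 'a='a]
  by (cases u) (auto simp: coprod_mon_None deg_Some split: if_splits)

lemma coprod_mon_deg_le: "(coprod_mon u (a, b) :: 'a::comm_ring_1) \<noteq> 0 \<Longrightarrow> deg a \<le> deg u \<and> deg b \<le> deg u"
  using coprod_mon_deg by fastforce

lemma coprod_mon_swap: "coprod_mon u (a, b) = coprod_mon u (b, a)"
proof (cases u)
  case (Some t)
  have "coprod_mon (Some t) (a, b) = coprod_mon (Some t) (b, a)" for a b
  proof (induction t arbitrary: a b)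
    case (MLeaf v) then show ?case by (simp add: coprod_mon_leaf)
  next
    case (MNode s t)
    show ?case unfolding coprod_mon_node tmult_factorizations
      by (subst sum.swap) (simp add: MNode.IH)
  qed
  then show ?thesis using Some by simp
qed (auto simp: coprod_mon_None)

lemma coprod_mon_right_None: "(coprod_mon u (a, None) :: 'a::comm_ring_1) = (if a = u then 1 else 0)"
proof (cases u)
  case (Some t)
  have "(coprod_mon (Some t) (a, None) :: 'a) = (if a = Some t then 1 else 0)" for a
  proof (induction t arbitrary: a)
    case (MLeaf v) then show ?case by (simp add: coprod_mon_leaf)
  next
    case (MNode s t)
    have "(coprod_mon (Some (MNode s t)) (a, None) :: 'a) =
        (\<Sum>p\<in>factorizations a. coprod_mon (Some s) (fst p, None) * coprod_mon (Some t) (snd p, None))"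
      by (simp add: coprod_mon_node tmult_factorizations factorizations_None)
    also have "\<dots> = (\<Sum>p\<in>factorizations a. if p = (Some s, Some t) then 1 else 0)"
      by (intro sum.cong refl) (auto simp: MNode.IH prod_eq_iff)
    finally show ?case by (simp add: sum_factorizations_delta eq_commute)
  qed
  then show ?thesis using Some by simp
qed (simp add: coprod_mon_None)

lemma coprod_mon_left_None: "(coprod_mon u (None, b) :: 'a::comm_ring_1) = (if b = u then 1 else 0)"
  by (simp add: coprod_mon_swap[of u None] coprod_mon_right_None)

lemma sum_factorizations2_delta:
  assumes "p0 \<in> factorizations a" "q0 \<in> factorizations b"
  shows "(\<Sum>p\<in>factorizations a. \<Sum>q\<in>factorizations b. if p = p0 \<and> q = q0 then c else 0) = c"
proof -
  have "(\<Sum>p\<in>factorizations a. \<Sum>q\<in>factorizations b. if p = p0 \<and> q = q0 then c else 0) =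
      (\<Sum>p\<in>factorizations a. if p = p0 then (\<Sum>q\<in>factorizations b. if q = q0 then c else 0) else 0)"
    by (intro sum.cong refl) auto
  then show ?thesis using assms by simp
qed

lemma tmult_one_left: "tmult (coprod_mon None) G (a, b) = (G (a, b) :: 'a::comm_ring_1)"
proof -
  have "tmult (coprod_mon None) G (a, b) = (\<Sum>p\<in>factorizations a. \<Sum>q\<in>factorizations b.
      if p = (None, a) \<and> q = (None, b) then G (a, b) else 0)"
    unfolding tmult_factorizations coprod_mon_None
    by (intro sum.cong refl) (auto simp: factorizations_def)
  also have "\<dots> = G (a, b)"
    by (rule sum_factorizations2_delta) (auto simp: factorizations_def)
  finally show ?thesis .
qed

lemma tmult_one_right: "tmult F (coprod_mon None) (a, b) = (F (a, b) :: 'a::comm_ring_1)"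
proof -
  have "tmult F (coprod_mon None) (a, b) = (\<Sum>p\<in>factorizations a. \<Sum>q\<in>factorizations b.
      if p = (a, None) \<and> q = (b, None) then F (a, b) else 0)"
    unfolding tmult_factorizations coprod_mon_None
    by (intro sum.cong refl) (auto simp: factorizations_def)
  also have "\<dots> = F (a, b)"
    by (rule sum_factorizations2_delta) (auto simp: factorizations_def)
  finally show ?thesis .
qed

lemma coprod_mon_mmul:
  "coprod_mon (mmul x y) (a, b) = (tmult (coprod_mon x) (coprod_mon y) (a, b) :: 'a::comm_ring_1)"
  by (cases x; cases y) (simp_all add: tmult_one_left tmult_one_right coprod_mon_node)

definition iterated_coprod_mon :: "'v::finite mon \<Rightarrow> 'v mon \<Rightarrow> 'v mon \<Rightarrow> 'v mon \<Rightarrow> 'a::comm_ring_1" where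
  "iterated_coprod_mon u a c b = (\<Sum>x\<in>mons_le (deg u). coprod_mon u (x, b) * coprod_mon x (a, c))"

lemma iterated_coprod_mon_node_expand: "(iterated_coprod_mon (Some (MNode s t)) a c b :: 'a::comm_ring_1) =
    (\<Sum>x1\<in>mons_le (tdeg s). \<Sum>x2\<in>mons_le (tdeg t).
      (\<Sum>r\<in>factorizations b. coprod_mon (Some s) (x1, fst r) * coprod_mon (Some t) (x2, snd r)) *
      coprod_mon (mmul x1 x2) (a, c))"
proof -
  define H where "H x1 x2 = (\<Sum>r\<in>factorizations b.
      coprod_mon (Some s) (x1, fst r) * coprod_mon (Some t) (x2, snd r)) * (coprod_mon (mmul x1 x2) (a, c) :: 'a)"
    for x1 x2
  have "iterated_coprod_mon (Some (MNode s t)) a c b = (\<Sum>x\<in>mons_le (tdeg s + tdeg t). \<Sum>(x1, x2)\<in>factorizations x. H x1 x2)"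
    unfolding iterated_coprod_mon_def deg_Some tdeg.simps
  proof (intro sum.cong refl)
    fix x
    show "coprod_mon (Some (MNode s t)) (x, b) * coprod_mon x (a, c) = (\<Sum>(x1, x2)\<in>factorizations x. H x1 x2)"
      unfolding coprod_mon_node tmult_factorizations H_def sum_distrib_right
      by (intro sum.cong refl) (auto simp: factorizations_def)
  qed
  also have "\<dots> = (\<Sum>x1\<in>mons_le (tdeg s). \<Sum>x2\<in>mons_le (tdeg t). H x1 x2)"
  proof (rule sum_factorizations_reindex)
    fix x1 x2 assume "H x1 x2 \<noteq> 0"
    then have "(\<Sum>r\<in>factorizations b. coprod_mon (Some s) (x1, fst r) * coprod_mon (Some t) (x2, snd r)) \<noteq> (0::'a)"
      unfolding H_def by auto
    then obtain r where "coprod_mon (Some s) (x1, fst r) * coprod_mon (Some t) (x2, snd r) \<noteq> (0::'a)"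
      by (meson sum.not_neutral_contains_not_neutral)
    then have "coprod_mon (Some s) (x1, fst r) \<noteq> (0::'a)" "coprod_mon (Some t) (x2, snd r) \<noteq> (0::'a)"
      by auto
    then have "deg x1 \<le> tdeg s" "deg x2 \<le> tdeg t"
      using coprod_mon_deg_le[of "Some s" x1] coprod_mon_deg_le[of "Some t" x2] by (auto simp: deg_Some)
    then show "deg x1 \<le> tdeg s \<and> deg x2 \<le> tdeg t \<and> deg x1 + deg x2 \<le> tdeg s + tdeg t"
      by simp
  qed
  finally show ?thesis by (simp add: H_def)
qed

lemma iterated_coprod_mon_node: "(iterated_coprod_mon (Some (MNode s t)) a c b :: 'a::comm_ring_1) =
    (\<Sum>p\<in>factorizations a. \<Sum>q\<in>factorizations c. \<Sum>r\<in>factorizations b.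
      iterated_coprod_mon (Some s) (fst p) (fst q) (fst r) * iterated_coprod_mon (Some t) (snd p) (snd q) (snd r))"
proof -
  define A where "A x1 x2 p q r = (coprod_mon (Some s) (x1, fst r) * coprod_mon (Some t) (x2, snd r) *
      (coprod_mon x1 (fst p, fst q) * coprod_mon x2 (snd p, snd q)) :: 'a)" for x1 x2 p q r
  have "iterated_coprod_mon (Some (MNode s t)) a c b = (\<Sum>x1\<in>mons_le (tdeg s). \<Sum>x2\<in>mons_le (tdeg t).
      \<Sum>p\<in>factorizations a. \<Sum>q\<in>factorizations c. \<Sum>r\<in>factorizations b. A x1 x2 p q r)"
    unfolding iterated_coprod_mon_node_expand A_def coprod_mon_mmul tmult_factorizations
    by (simp add: sum_distrib_left sum_distrib_right)
  also have "\<dots> = (\<Sum>p\<in>factorizations a. \<Sum>q\<in>factorizations c. \<Sum>r\<in>factorizations b.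
      \<Sum>x1\<in>mons_le (tdeg s). \<Sum>x2\<in>mons_le (tdeg t). A x1 x2 p q r)"
    by (rule trans[OF sum.cong[OF refl sum_rotate4] sum_rotate4])
  also have "\<dots> = (\<Sum>p\<in>factorizations a. \<Sum>q\<in>factorizations c. \<Sum>r\<in>factorizations b.
      iterated_coprod_mon (Some s) (fst p) (fst q) (fst r) * iterated_coprod_mon (Some t) (snd p) (snd q) (snd r))"
    unfolding iterated_coprod_mon_def A_def deg_Some sum_product
    by (intro sum.cong refl) (simp only: ac_simps)
  finally show ?thesis .
qed

lemma sum_coprod_mon_leaf:
  assumes "N \<ge> 1"
  shows "(\<Sum>x\<in>(mons_le N :: 'v::finite mon set). coprod_mon (leaf v) (x, b) * F x) =
    (if b = None then F (leaf v) else 0) + (if b = leaf v then F None else (0::'a::comm_ring_1))"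
proof -
  have "(\<Sum>x\<in>mons_le N. coprod_mon (leaf v) (x, b) * F x) =
      (\<Sum>x\<in>mons_le N. (if x = leaf v then (if b = None then F x else 0) else 0)) +
      (\<Sum>x\<in>mons_le N. (if x = None then (if b = leaf v then F x else 0) else 0))"
    unfolding coprod_mon_leaf sum.distrib[symmetric] by (intro sum.cong refl) auto
  then show ?thesis using assms by simp
qed

lemma iterated_coprod_mon_sym: "(iterated_coprod_mon u a c b :: 'a::comm_ring_1) = iterated_coprod_mon u b c a"
proof (cases u)
  case None
  then show ?thesis by (simp add: iterated_coprod_mon_def coprod_mon_None mons_le_0)
next
  case (Some t)
  have "(iterated_coprod_mon (Some t) a c b :: 'a) = iterated_coprod_mon (Some t) b c a" for a b c
  proof (induction t arbitrary: a b c)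
    case (MLeaf v)
    have "(iterated_coprod_mon (leaf v) a c b :: 'a) = (if b = None then coprod_mon (leaf v) (a, c) else 0) +
        (if b = leaf v then coprod_mon None (a, c) else 0)" for a b c
      unfolding iterated_coprod_mon_def by (subst sum_coprod_mon_leaf) auto
    then show ?case by (simp add: coprod_mon_leaf coprod_mon_None)
  next
    case (MNode s t)
    show ?case
      unfolding iterated_coprod_mon_node by (subst MNode.IH(1), subst MNode.IH(2)) (rule sum_swap3)
  qed
  then show ?thesis using Some by simp
qed

lemma coprod_mon_coassoc:
  fixes u :: "'v::finite mon"
  shows "(\<Sum>y\<in>mons_le (deg u). coprod_mon u (a, y) * coprod_mon y (c, b)) =
   (\<Sum>x\<in>mons_le (deg u). (coprod_mon u (x, b) * coprod_mon x (a, c) :: 'a::comm_ring_1))"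
proof -
  have "(\<Sum>y\<in>mons_le (deg u). coprod_mon u (a, y) * coprod_mon y (c, b)) = (iterated_coprod_mon u b c a :: 'a)"
    unfolding iterated_coprod_mon_def by (intro sum.cong refl) (metis coprod_mon_swap)
  also have "\<dots> = iterated_coprod_mon u a c b" by (rule iterated_coprod_mon_sym)
  finally show ?thesis by (simp add: iterated_coprod_mon_def)
qed

section \<open>Left division\<close>

text \<open>The first defining identity \<Sum> u(1) \ (u(2) v) = \<epsilon>(u) v, solved for its term u \ v.\<close>
function ldiv_rec :: "'v::finite mon \<Rightarrow> 'v mon \<Rightarrow> ('v, 'a::comm_ring_1) ser" where
  "ldiv_rec u v = (if u = None then mon v else
     (\<lambda>w. - (\<Sum>a\<in>mons_le (deg u). \<Sum>b\<in>mons_le (deg u).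
           if deg a < deg u then coprod_mon u (a, b) * ldiv_rec a (mmul b v) w else 0)))"
  by auto
termination by (relation "measure (\<lambda>(u, v). deg u)") auto

declare ldiv_rec.simps [simp del]

lemma ldiv_rec_None: "ldiv_rec None v = mon v"
  by (simp add: ldiv_rec.simps)

lemma ldiv_rec_not_None: "u \<noteq> None \<Longrightarrow> ldiv_rec u v w =
    - (\<Sum>a\<in>mons_le (deg u). \<Sum>b\<in>mons_le (deg u).
         if deg a < deg u then coprod_mon u (a, b) * ldiv_rec a (mmul b v) w else 0)"
  by (subst ldiv_rec.simps) auto

lemma sum_coprod_mon_eq_box:
  fixes u :: "'v::finite mon" and F :: "'v mon \<Rightarrow> 'v mon \<Rightarrow> 'a::comm_ring_1"
  assumes "deg u \<le> N"
  shows "(\<Sum>(a, b)\<in>{(a, b). deg a + deg b = deg u}. coprod_mon u (a, b) * F a b) =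
    (\<Sum>a\<in>mons_le N. \<Sum>b\<in>mons_le N. coprod_mon u (a, b) * F a b)"
proof -
  have "(\<Sum>(a, b)\<in>{(a, b). deg a + deg b = deg u}. coprod_mon u (a, b) * F a b) =
      (\<Sum>(a, b)\<in>mons_le N \<times> mons_le N. coprod_mon u (a, b) * F a b)"
  proof (rule sum.mono_neutral_left)
    show "\<forall>p\<in>mons_le N \<times> mons_le N - {(a, b). deg a + deg b = deg u}.
        (case p of (a, b) \<Rightarrow> coprod_mon u (a, b) * F a b) = 0"
    proof
      fix p :: "'v mon \<times> 'v mon" assume p: "p \<in> mons_le N \<times> mons_le N - {(a, b). deg a + deg b = deg u}"
      obtain a b :: "'v mon" where ab: "p = (a, b)" by fastforce
      have "coprod_mon u (a, b) = (0::'a)" using p ab coprod_mon_deg[of u a b, where 'a='a] by auto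
      then show "(case p of (a, b) \<Rightarrow> coprod_mon u (a, b) * F a b) = 0" using ab by simp
    qed
  qed (use assms in auto)
  then show ?thesis by (simp add: sum.cartesian_product)
qed

lemma sum_coprod_mon_restrict:
  fixes u :: "'v::finite mon" and F :: "'v mon \<Rightarrow> 'v mon \<Rightarrow> 'a::comm_ring_1"
  assumes "deg u \<le> N"
  shows "(\<Sum>a\<in>mons_le N. \<Sum>b\<in>mons_le N. coprod_mon u (a, b) * F a b) =
    (\<Sum>a\<in>mons_le (deg u). \<Sum>b\<in>mons_le (deg u). coprod_mon u (a, b) * F a b)"
  using sum_coprod_mon_eq_box[OF assms, of F] sum_coprod_mon_eq_box[of u "deg u" F] by simp

text \<open>The only term u(1) \<otimes> u(2) with deg u(1) = deg u is u \<otimes> 1.\<close>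
lemma sum_coprod_mon_split:
  fixes F :: "'v::finite mon \<Rightarrow> 'v mon \<Rightarrow> 'a::comm_ring_1"
  assumes "deg u \<le> N"
  shows "(\<Sum>a\<in>mons_le N. \<Sum>b\<in>mons_le N. coprod_mon u (a, b) * F a b) = F u None +
    (\<Sum>a\<in>mons_le N. \<Sum>b\<in>mons_le N. if deg a < deg u then coprod_mon u (a, b) * F a b else 0)"
proof -
  have top_degree: "(if deg a < deg u then 0 else coprod_mon u (a, b) * F a b) =
      (if a = u then (if b = None then F u None else 0) else 0)" for a b :: "'v mon"
  proof (cases "coprod_mon u (a, b) = (0::'a)")
    case True
    then show ?thesis using coprod_mon_right_None[of u a, where 'a='a] by auto
  next
    case False
    then have "deg a + deg b = deg u" using coprod_mon_deg by blast
    with False show ?thesis using coprod_mon_right_None[of u a, where 'a='a] deg_eq_0_iff[of b] by auto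
  qed
  have "(\<Sum>a\<in>mons_le N. \<Sum>b\<in>mons_le N. coprod_mon u (a, b) * F a b) =
      (\<Sum>a\<in>mons_le N. \<Sum>b\<in>mons_le N. if deg a < deg u then 0 else coprod_mon u (a, b) * F a b) +
      (\<Sum>a\<in>mons_le N. \<Sum>b\<in>mons_le N. if deg a < deg u then coprod_mon u (a, b) * F a b else 0)"
    by (simp add: sum.distrib[symmetric] if_distrib cong: if_cong)
  also have "(\<Sum>a\<in>mons_le N. \<Sum>b\<in>mons_le N. if deg a < deg u then 0 else coprod_mon u (a, b) * F a b) = F u None"
  proof -
    have "(\<Sum>a\<in>mons_le N. \<Sum>b\<in>(mons_le N :: 'v mon set). if a = u then (if b = None then F u None else 0) else 0) =
        (\<Sum>a\<in>mons_le N. if a = u then (\<Sum>b\<in>(mons_le N :: 'v mon set). if b = None then F u None else 0) else 0)"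
      by (rule sum.cong) auto
    also have "\<dots> = F u None" using assms by simp
    finally show ?thesis unfolding top_degree .
  qed
  finally show ?thesis .
qed

lemma ldiv_rec_left_identity:
  assumes "deg u \<le> N"
  shows "(\<Sum>a\<in>mons_le N. \<Sum>b\<in>mons_le N. coprod_mon u (a, b) * ldiv_rec a (mmul b v) w) =
    (if u = None then mon v w else (0::'a::comm_ring_1))"
proof (cases "u = None")
  case True
  then show ?thesis using sum_coprod_mon_split[OF assms, of "\<lambda>a b. ldiv_rec a (mmul b v) w"]
    by (simp add: ldiv_rec_None)
next
  case False
  have "(\<Sum>a\<in>mons_le N. \<Sum>b\<in>mons_le N.
        if deg a < deg u then coprod_mon u (a, b) * ldiv_rec a (mmul b v) w else (0::'a)) =
      (\<Sum>a\<in>mons_le N. \<Sum>b\<in>mons_le N. coprod_mon u (a, b) * (if deg a < deg u then ldiv_rec a (mmul b v) w else 0))"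
    by (intro sum.cong refl) simp
  also have "\<dots> = (\<Sum>a\<in>mons_le (deg u). \<Sum>b\<in>mons_le (deg u).
      coprod_mon u (a, b) * (if deg a < deg u then ldiv_rec a (mmul b v) w else 0))"
    by (rule sum_coprod_mon_restrict[OF assms])
  also have "\<dots> = - ldiv_rec u v w"
    unfolding ldiv_rec_not_None[OF False] by (auto intro!: sum.cong)
  finally have "(\<Sum>a\<in>mons_le N. \<Sum>b\<in>mons_le N.
      if deg a < deg u then coprod_mon u (a, b) * ldiv_rec a (mmul b v) w else (0::'a)) = - ldiv_rec u v w" .
  then show ?thesis
    unfolding sum_coprod_mon_split[OF assms, of "\<lambda>a b. ldiv_rec a (mmul b v) w"] by (simp add: False)
qed

lemma ldiv_rec_homogeneous:
  fixes u v w :: "'v::finite mon"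
  shows "(ldiv_rec u v w :: 'a::comm_ring_1) \<noteq> 0 \<Longrightarrow> deg w = deg u + deg v"
proof (induction "deg u" arbitrary: u v w rule: less_induct)
  case less
  show ?case
  proof (cases "u = None")
    case True
    then show ?thesis using less.prems by (auto simp: ldiv_rec_None mon_def split: if_splits)
  next
    case False
    with less.prems have "(\<Sum>a\<in>mons_le (deg u). \<Sum>b\<in>mons_le (deg u).
        if deg a < deg u then coprod_mon u (a, b) * ldiv_rec a (mmul b v) w else (0::'a)) \<noteq> 0"
      by (simp add: ldiv_rec_not_None)
    then obtain a :: "'v mon" where "(\<Sum>b\<in>mons_le (deg u).
        if deg a < deg u then coprod_mon u (a, b) * ldiv_rec a (mmul b v) w else (0::'a)) \<noteq> 0"
      by (meson sum.not_neutral_contains_not_neutral)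
    then obtain b where "b \<in> mons_le (deg u)"
      and "(if deg a < deg u then coprod_mon u (a, b) * ldiv_rec a (mmul b v) w else (0::'a)) \<noteq> 0"
      by (rule sum.not_neutral_contains_not_neutral)
    then have "deg a < deg u" "coprod_mon u (a, b) \<noteq> (0::'a)" "ldiv_rec a (mmul b v) w \<noteq> (0::'a)"
      by (auto split: if_splits)
    then show ?thesis using less.hyps[of a "mmul b v" w] coprod_mon_deg[of u a b, where 'a='a] by auto
  qed
qed

lemma mult_mon_ldiv_rec_left_identity:
  assumes "deg y \<le> N"
  shows "(\<Sum>d\<in>mons_le N. \<Sum>b\<in>mons_le N.
      coprod_mon y (d, b) * ser_mult (mon c) (ldiv_rec d (mmul b v)) w) =
    (if y = None then mon (mmul c v) w else (0::'a::comm_ring_1))"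
proof -
  have "(\<Sum>d\<in>mons_le N. \<Sum>b\<in>mons_le N. coprod_mon y (d, b) * ser_mult (mon c) (ldiv_rec d (mmul b v)) w) =
      ser_mult (mon c) (\<lambda>w'. \<Sum>d\<in>mons_le N. \<Sum>b\<in>mons_le N. coprod_mon y (d, b) * ldiv_rec d (mmul b v) w') w"
    by (simp add: ser_mult_sum2_right)
  also have "\<dots> = ser_mult (mon c) (\<lambda>w'. if y = None then mon v w' else 0) w"
    by (simp only: ldiv_rec_left_identity[OF assms])
  also have "\<dots> = (if y = None then mon (mmul c v) w else 0)"
    by (cases y) (simp_all add: ser_mult_mon)
  finally show ?thesis .
qed

text \<open>Coassociativity turns \<Sum> u(1) (u(2) \ (u(3) v)) into \<Sum> u(1) (u(2)(1) \ (u(2)(2) v)), which is u v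
  by the first identity.\<close>
lemma sum_coprod_mon_mult_ldiv_rec:
  fixes u :: "'v::finite mon"
  defines "N \<equiv> deg u"
  shows "(\<Sum>a\<in>mons_le N. \<Sum>b\<in>mons_le N. coprod_mon u (a, b) * (\<Sum>c\<in>mons_le N. \<Sum>d\<in>mons_le N.
      coprod_mon a (c, d) * ser_mult (mon c) (ldiv_rec d (mmul b v)) w)) = (mon (mmul u v) w :: 'a::comm_ring_1)"
proof -
  define G where "G c d b = (ser_mult (mon c) (ldiv_rec d (mmul b v)) w :: 'a)" for c d b
  have "(\<Sum>a\<in>mons_le N. \<Sum>b\<in>mons_le N. coprod_mon u (a, b) *
        (\<Sum>c\<in>mons_le N. \<Sum>d\<in>mons_le N. coprod_mon a (c, d) * G c d b)) =
      (\<Sum>a\<in>mons_le N. \<Sum>b\<in>mons_le N. \<Sum>c\<in>mons_le N. \<Sum>d\<in>mons_le N.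
        coprod_mon u (a, b) * coprod_mon a (c, d) * G c d b)"
    by (simp add: sum_distrib_left mult.assoc)
  also have "\<dots> = (\<Sum>b\<in>mons_le N. \<Sum>c\<in>mons_le N. \<Sum>d\<in>mons_le N. \<Sum>a\<in>mons_le N.
      coprod_mon u (a, b) * coprod_mon a (c, d) * G c d b)"
    by (rule sum_rotate4)
  also have "\<dots> = (\<Sum>b\<in>mons_le N. \<Sum>c\<in>mons_le N. \<Sum>d\<in>mons_le N.
      \<Sum>y\<in>mons_le N. coprod_mon u (c, y) * coprod_mon y (d, b) * G c d b)"
    by (simp add: sum_distrib_right[symmetric] N_def coprod_mon_coassoc)
  also have "\<dots> = (\<Sum>c\<in>mons_le N. \<Sum>d\<in>mons_le N. \<Sum>y\<in>mons_le N. \<Sum>b\<in>mons_le N.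
      coprod_mon u (c, y) * coprod_mon y (d, b) * G c d b)"
    by (rule sum_rotate4)
  also have "\<dots> = (\<Sum>c\<in>mons_le N. \<Sum>y\<in>mons_le N. \<Sum>d\<in>mons_le N. \<Sum>b\<in>mons_le N.
      coprod_mon u (c, y) * coprod_mon y (d, b) * G c d b)"
    by (rule sum.cong[OF refl], rule sum.swap)
  also have "\<dots> = (\<Sum>c\<in>mons_le N. \<Sum>y\<in>mons_le N.
      coprod_mon u (c, y) * (\<Sum>d\<in>mons_le N. \<Sum>b\<in>mons_le N. coprod_mon y (d, b) * G c d b))"
    by (simp add: sum_distrib_left mult.assoc)
  also have "\<dots> = (\<Sum>c\<in>mons_le N. \<Sum>y\<in>mons_le N.
      coprod_mon u (c, y) * (if y = None then mon (mmul c v) w else 0))"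
    unfolding G_def by (intro sum.cong refl) (simp add: mult_mon_ldiv_rec_left_identity)
  also have "\<dots> = (\<Sum>c\<in>mons_le N. if c = u then mon (mmul u v) w else 0)"
    by (intro sum.cong refl) (auto simp: coprod_mon_right_None if_distrib cong: if_cong)
  also have "\<dots> = mon (mmul u v) w"
    by (simp add: N_def)
  finally show ?thesis unfolding G_def .
qed

text \<open>The defect of the second identity \<Sum> u(1) (u(2) \ v) = \<epsilon>(u) v. It satisfies the homogeneous
  version of the recursion defining ldiv_rec, hence vanishes.\<close>
definition ldiv_rec_defect :: "'v::finite mon \<Rightarrow> 'v mon \<Rightarrow> 'v mon \<Rightarrow> 'a::comm_ring_1" where
  "ldiv_rec_defect u v w =
    (\<Sum>a\<in>mons_le (deg u). \<Sum>b\<in>mons_le (deg u). coprod_mon u (a, b) * ser_mult (mon a) (ldiv_rec b v) w)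
    - (if u = None then mon v w else 0)"

lemma sum_coprod_mon_ldiv_rec_defect:
  fixes u v :: "'v::finite mon"
  shows "(\<Sum>a\<in>mons_le (deg u). \<Sum>b\<in>mons_le (deg u).
    coprod_mon u (a, b) * (ldiv_rec_defect a (mmul b v) w :: 'a::comm_ring_1)) = 0"
proof -
  define N where "N = deg u"
  have expand: "coprod_mon u (a, b) * ldiv_rec_defect a (mmul b v) w =
      coprod_mon u (a, b) * ((\<Sum>c\<in>mons_le N. \<Sum>d\<in>mons_le N.
        coprod_mon a (c, d) * ser_mult (mon c) (ldiv_rec d (mmul b v)) w)
      - (if a = None then mon (mmul b v) w else (0::'a)))" for a b
  proof (cases "coprod_mon u (a, b) = (0::'a)")
    case False
    then have "deg a \<le> N" using coprod_mon_deg_le[of u a b, where 'a='a] by (auto simp: N_def)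
    then show ?thesis unfolding ldiv_rec_defect_def using sum_coprod_mon_restrict[of a N, where 'a='a] by simp
  qed simp
  have unit_part: "(\<Sum>a\<in>mons_le N. \<Sum>b\<in>mons_le N.
      coprod_mon u (a, b) * (if a = None then mon (mmul b v) w else (0::'a))) = mon (mmul u v) w"
  proof -
    have "(\<Sum>a\<in>mons_le N. \<Sum>b\<in>mons_le N. coprod_mon u (a, b) * (if a = None then mon (mmul b v) w else (0::'a))) =
        (\<Sum>a\<in>(mons_le N :: 'v mon set). if a = None then (\<Sum>b\<in>mons_le N. if b = u then mon (mmul u v) w else 0) else 0)"
      by (rule sum.cong[OF refl]) (auto simp: coprod_mon_left_None N_def sum_delta_mult)
    then show ?thesis by (simp add: N_def)
  qed
  show ?thesis
    using sum_coprod_mon_mult_ldiv_rec[of u v w, where 'a='a] unit_part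
    unfolding N_def[symmetric] expand by (simp add: right_diff_distrib sum_subtractf)
qed

lemma ldiv_rec_defect_eq_0: "(ldiv_rec_defect u v w :: 'a::comm_ring_1) = 0"
proof (induction "deg u" arbitrary: u v w rule: less_induct)
  case less
  have "(0::'a) = (\<Sum>a\<in>mons_le (deg u). \<Sum>b\<in>mons_le (deg u). coprod_mon u (a, b) * ldiv_rec_defect a (mmul b v) w)"
    using sum_coprod_mon_ldiv_rec_defect[of u v w, where 'a='a] by simp
  also have "\<dots> = ldiv_rec_defect u (mmul None v) w + (\<Sum>a\<in>mons_le (deg u). \<Sum>b\<in>mons_le (deg u).
      if deg a < deg u then coprod_mon u (a, b) * ldiv_rec_defect a (mmul b v) w else 0)"
    by (rule sum_coprod_mon_split) simp
  also have "(\<Sum>a\<in>mons_le (deg u). \<Sum>b\<in>mons_le (deg u).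
      if deg a < deg u then coprod_mon u (a, b) * ldiv_rec_defect a (mmul b v) w else (0::'a)) = 0"
    using less.hyps by (intro sum.neutral ballI) simp
  finally show ?case by simp
qed

lemma ldiv_ok_ldiv_rec: "ldiv_ok (ldiv_rec :: 'v::finite mon \<Rightarrow> 'v mon \<Rightarrow> ('v, 'a::comm_ring_1) ser)"
  unfolding ldiv_ok_def
proof (intro conjI allI ext)
  fix u v w :: "'v mon"
  show "(\<Sum>(a, b)\<in>{(a, b). deg a + deg b = deg u}. coprod_mon u (a, b) * (ldiv_rec a (mmul b v) w :: 'a)) =
      ser_scale (counit (mon u)) (mon v) w"
    unfolding sum_coprod_mon_eq_box[OF order.refl] ldiv_rec_left_identity[OF order.refl, where 'a='a]
    by (simp add: ser_scale_def counit_def mon_def)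
  show "(\<Sum>(a, b)\<in>{(a, b). deg a + deg b = deg u}. coprod_mon u (a, b) * (ser_mult (mon a) (ldiv_rec b v) w :: 'a)) =
      ser_scale (counit (mon u)) (mon v) w"
    using ldiv_rec_defect_eq_0[of u v w, where 'a='a]
    unfolding sum_coprod_mon_eq_box[OF order.refl] ldiv_rec_defect_def
    by (simp add: ser_scale_def counit_def mon_def)
qed

text \<open>The first identity alone already determines u \ v, by induction on deg u.\<close>
lemma ldiv_ok_unique:
  assumes "ldiv_ok (D :: 'v::finite mon \<Rightarrow> 'v mon \<Rightarrow> ('v, 'a::comm_ring_1) ser)"
  shows "D = ldiv_rec"
proof -
  have left_identity: "(\<Sum>a\<in>mons_le (deg u). \<Sum>b\<in>mons_le (deg u). coprod_mon u (a, b) * D a (mmul b v) w) =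
      (if u = None then mon v w else (0::'a))" for u v w
  proof -
    have "(\<lambda>w. \<Sum>(a, b)\<in>{(a, b). deg a + deg b = deg u}. coprod_mon u (a, b) * D a (mmul b v) w) =
        ser_scale (counit (mon u)) (mon v)"
      using assms unfolding ldiv_ok_def by blast
    from fun_cong[OF this, of w] show ?thesis
      unfolding sum_coprod_mon_eq_box[OF order.refl] by (simp add: ser_scale_def counit_def mon_def)
  qed
  have "D u v w = ldiv_rec u v w" for u v w
  proof (induction "deg u" arbitrary: u v w rule: less_induct)
    case less
    let ?lower = "\<lambda>D'. \<Sum>a\<in>mons_le (deg u). \<Sum>b\<in>mons_le (deg u).
      if deg a < deg u then coprod_mon u (a, b) * D' a (mmul b v) w else (0::'a)"
    have "?lower D = ?lower ldiv_rec"
      using less.hyps by (intro sum.cong refl) simp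
    then have D_eq: "D u v w + ?lower ldiv_rec = (if u = None then mon v w else 0)"
      using left_identity[of u v w] sum_coprod_mon_split[OF order.refl, of u "\<lambda>a b. D a (mmul b v) w"]
      by simp
    have "ldiv_rec u v w + ?lower ldiv_rec =
        (\<Sum>a\<in>mons_le (deg u). \<Sum>b\<in>mons_le (deg u). coprod_mon u (a, b) * ldiv_rec a (mmul b v) w)"
      using sum_coprod_mon_split[OF order.refl, of u "\<lambda>a b. (ldiv_rec a (mmul b v) w :: 'a)"] by simp
    also have "\<dots> = (if u = None then mon v w else 0)"
      by (rule ldiv_rec_left_identity[OF order.refl])
    finally have L_eq: "ldiv_rec u v w + ?lower ldiv_rec = (if u = None then mon v w else 0)" .
    show ?case by (rule add_right_imp_eq[of _ "?lower ldiv_rec"]) (simp only: D_eq L_eq)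
  qed
  then show ?thesis by (intro ext)
qed

lemma ldiv_mon_eq_ldiv_rec: "(ldiv_mon :: 'v::finite mon \<Rightarrow> 'v mon \<Rightarrow> ('v, 'a::comm_ring_1) ser) = ldiv_rec"
  unfolding ldiv_mon_def using ldiv_ok_ldiv_rec ldiv_ok_unique by blast

lemma ldiv_eq_box:
  fixes f g :: "('v::finite, 'a::comm_ring_1) ser"
  assumes "deg z \<le> N"
  shows "ldiv f g z = (\<Sum>u\<in>mons_le N. \<Sum>v\<in>mons_le N. f u * g v * ldiv_rec u v z)"
proof -
  have "ldiv f g z = (\<Sum>(u, v)\<in>{(u, v). deg u + deg v = deg z}. f u * g v * ldiv_rec u v z)"
    unfolding ldiv_def ldiv_mon_eq_ldiv_rec ..
  also have "\<dots> = (\<Sum>(u, v)\<in>mons_le N \<times> mons_le N. f u * g v * ldiv_rec u v z)"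
  proof (rule sum.mono_neutral_left)
    show "\<forall>p\<in>mons_le N \<times> mons_le N - {(u, v). deg u + deg v = deg z}.
        (case p of (u, v) \<Rightarrow> f u * g v * ldiv_rec u v z) = 0"
    proof
      fix p :: "'v mon \<times> 'v mon" assume p: "p \<in> mons_le N \<times> mons_le N - {(u, v). deg u + deg v = deg z}"
      obtain u v where uv: "p = (u, v)" by fastforce
      have "ldiv_rec u v z = (0::'a)" using p uv ldiv_rec_homogeneous[of u v z, where 'a='a] by auto
      then show "(case p of (u, v) \<Rightarrow> f u * g v * ldiv_rec u v z) = 0" using uv by simp
    qed
  qed (use assms in auto)
  finally show ?thesis by (simp add: sum.cartesian_product)
qed

lemma mult_mon_ldiv_rec_homogeneous:
  fixes p u v w :: "'v::finite mon"
  assumes "(ser_mult (mon p) (ldiv_rec u v) w :: 'a::comm_ring_1) \<noteq> 0"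
  shows "deg p + deg u + deg v = deg w"
proof -
  from assms obtain p' z where "(p', z) \<in> factorizations w"
    and "mon p p' * (ldiv_rec u v z :: 'a) \<noteq> 0"
    unfolding ser_mult_factorizations by (auto elim: sum.not_neutral_contains_not_neutral)
  then show ?thesis
    using ldiv_rec_homogeneous[of u v z, where 'a='a] deg_factorization[of p' z w]
    by (auto simp: mon_def split: if_splits)
qed

lemma sum_factorizations_eq_mult_mon:
  fixes f :: "('v::finite, 'a::comm_ring_1) ser"
  assumes "deg w \<le> N"
  shows "(\<Sum>(p, z)\<in>factorizations w. f p * H z) = (\<Sum>p\<in>mons_le N. f p * ser_mult (mon p) H w)"
proof -
  have "(\<Sum>p\<in>mons_le N. f p * ser_mult (mon p) H w) =
      (\<Sum>q\<in>factorizations w. \<Sum>p\<in>mons_le N. (if fst q = p then 1 else 0) * (f p * H (snd q)))"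
    unfolding ser_mult_factorizations mon_def
    by (simp add: sum_distrib_left case_prod_beta mult_ac sum.swap[of _ "mons_le N"])
  also have "\<dots> = (\<Sum>q\<in>factorizations w. f (fst q) * H (snd q))"
  proof (rule sum.cong[OF refl])
    fix q assume "q \<in> factorizations w"
    then have "deg (fst q) \<le> N" using assms deg_factorization[of "fst q" "snd q" w] by auto
    then show "(\<Sum>p\<in>mons_le N. (if fst q = p then 1 else 0) * (f p * H (snd q))) = f (fst q) * H (snd q)"
      by (simp add: sum_delta_mult eq_commute[of "fst q"])
  qed
  finally show ?thesis by (simp add: case_prod_beta)
qed

lemma group_like_mult_coeffs:
  fixes f :: "('v::finite, 'a::comm_ring_1) ser"
  assumes "coprod f = tensor f f" and "deg p + deg u \<le> K"
  shows "f p * f u = (\<Sum>s\<in>mons_le K. f s * coprod_mon s (p, u))"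
proof -
  have "f p * f u = coprod f (p, u)" using assms(1) by (simp add: tensor_def fun_eq_iff)
  also have "\<dots> = (\<Sum>s\<in>{s. deg s = deg p + deg u}. f s * coprod_mon s (p, u))"
    by (simp add: coprod_def)
  also have "\<dots> = (\<Sum>s\<in>mons_le K. f s * coprod_mon s (p, u))"
  proof (rule sum.mono_neutral_left)
    show "\<forall>s\<in>mons_le K - {s. deg s = deg p + deg u}. f s * coprod_mon s (p, u) = 0"
    proof
      fix s :: "'v mon" assume "s \<in> mons_le K - {s. deg s = deg p + deg u}"
      then have "coprod_mon s (p, u) = (0::'a)" using coprod_mon_deg[of s p u, where 'a='a] by auto
      then show "f s * coprod_mon s (p, u) = 0" by simp
    qed
  qed (use assms(2) in auto)
  finally show ?thesis .
qed

lemma mult_mon_ldiv_rec_right_identity: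
  fixes s v w :: "'v::finite mon"
  assumes "deg w \<le> N"
  shows "(\<Sum>p\<in>mons_le N. \<Sum>u\<in>mons_le N. coprod_mon s (p, u) * ser_mult (mon p) (ldiv_rec u v) w) =
    (if s = None then mon v w else (0::'a::comm_ring_1))"
proof -
  define T where "T p u = (coprod_mon s (p, u) * ser_mult (mon p) (ldiv_rec u v) w :: 'a)" for p u
  have vanish: "T p u = 0" if "deg p > N \<or> deg u > N \<or> deg p > deg s \<or> deg u > deg s" for p u
  proof (rule ccontr)
    assume "T p u \<noteq> 0"
    then have "coprod_mon s (p, u) \<noteq> (0::'a)" "ser_mult (mon p) (ldiv_rec u v) w \<noteq> (0::'a)"
      by (auto simp: T_def)
    then show False
      using that assms coprod_mon_deg_le[of s p u] mult_mon_ldiv_rec_homogeneous[of p u v w] by auto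
  qed
  have "(\<Sum>p\<in>mons_le N. \<Sum>u\<in>mons_le N. T p u) = (\<Sum>p\<in>mons_le N. \<Sum>u\<in>mons_le (deg s). T p u)"
    by (intro sum.cong refl sum_mons_le_cong) (use vanish in auto)
  also have "\<dots> = (\<Sum>p\<in>mons_le (deg s). \<Sum>u\<in>mons_le (deg s). T p u)"
    by (intro sum_mons_le_cong) (use vanish in \<open>auto intro!: sum.neutral\<close>)
  also have "\<dots> = (if s = None then mon v w else 0)"
    using ldiv_rec_defect_eq_0[of s v w, where 'a='a] by (simp add: ldiv_rec_defect_def T_def)
  finally show ?thesis by (simp add: T_def)
qed


lemma group_like_sum_mult_ldiv_rec:
  fixes f :: "('v::finite, 'a::comm_ring_1) ser"
  assumes "coprod f = tensor f f" and "deg w \<le> N"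
  shows "(\<Sum>p\<in>mons_le N. \<Sum>u\<in>mons_le N. f p * f u * ser_mult (mon p) (ldiv_rec u v) w) = f None * mon v w"
proof -
  define X where "X p u = (ser_mult (mon p) (ldiv_rec u v) w :: 'a)" for p u
  have "(\<Sum>p\<in>mons_le N. \<Sum>u\<in>mons_le N. f p * f u * X p u) =
      (\<Sum>p\<in>mons_le N. \<Sum>u\<in>mons_le N. \<Sum>s\<in>mons_le (2 * N). f s * (coprod_mon s (p, u) * X p u))"
  proof (intro sum.cong refl)
    fix p u :: "'v mon" assume "p \<in> mons_le N" "u \<in> mons_le N"
    then have "f p * f u = (\<Sum>s\<in>mons_le (2 * N). f s * coprod_mon s (p, u))"
      by (intro group_like_mult_coeffs[OF assms(1)]) auto
    then show "f p * f u * X p u = (\<Sum>s\<in>mons_le (2 * N). f s * (coprod_mon s (p, u) * X p u))"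
      by (simp add: sum_distrib_right mult.assoc)
  qed
  also have "\<dots> = (\<Sum>s\<in>mons_le (2 * N). \<Sum>p\<in>mons_le N. \<Sum>u\<in>mons_le N. f s * (coprod_mon s (p, u) * X p u))"
    by (rule trans[OF sum_swap3 sum.cong[OF refl sum.swap]])
  also have "\<dots> = (\<Sum>s\<in>mons_le (2 * N). f s * (\<Sum>p\<in>mons_le N. \<Sum>u\<in>mons_le N. coprod_mon s (p, u) * X p u))"
    by (simp add: sum_distrib_left)
  also have "\<dots> = (\<Sum>s\<in>mons_le (2 * N). f s * (if s = None then mon v w else 0))"
    unfolding X_def by (simp add: mult_mon_ldiv_rec_right_identity[OF assms(2)])
  also have "\<dots> = f None * mon v w"
    by (simp add: if_distrib[of "\<lambda>x. _ * x"] cong: if_cong)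
  finally show ?thesis unfolding X_def .
qed

lemma ser_mult_ldiv_cancel:
  fixes f g :: "('v::finite, 'a::comm_ring_1) ser"
  assumes "coprod f = tensor f f" and "f None = 1"
  shows "ser_mult f (ldiv f g) = g"
proof
  fix w :: "'v mon"
  define N where "N = deg w"
  define X where "X p u v = (ser_mult (mon p) (ldiv_rec u v) w :: 'a)" for p u v
  have "ser_mult f (ldiv f g) w =
      (\<Sum>(p, z)\<in>factorizations w. f p * (\<Sum>u\<in>mons_le N. \<Sum>v\<in>mons_le N. f u * g v * ldiv_rec u v z))"
    unfolding ser_mult_factorizations
  proof (intro sum.cong refl, clarify)
    fix p z assume "(p, z) \<in> factorizations w"
    then have "deg z \<le> N" using deg_factorization[of p z w] by (simp add: N_def)
    then show "f p * ldiv f g z = f p * (\<Sum>u\<in>mons_le N. \<Sum>v\<in>mons_le N. f u * g v * ldiv_rec u v z)"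
      by (simp add: ldiv_eq_box)
  qed
  also have "\<dots> = (\<Sum>q\<in>factorizations w. \<Sum>u\<in>mons_le N. \<Sum>v\<in>mons_le N.
      f u * g v * (f (fst q) * ldiv_rec u v (snd q)))"
    by (simp add: sum_distrib_left mult_ac case_prod_beta)
  also have "\<dots> = (\<Sum>u\<in>mons_le N. \<Sum>v\<in>mons_le N. \<Sum>q\<in>factorizations w.
      f u * g v * (f (fst q) * ldiv_rec u v (snd q)))"
    by (rule sum_swap3[THEN trans], rule sum.swap)
  also have "\<dots> = (\<Sum>u\<in>mons_le N. \<Sum>v\<in>mons_le N. f u * g v * (\<Sum>p\<in>mons_le N. f p * X p u v))"
    unfolding X_def N_def
    by (simp add: sum_distrib_left[symmetric] sum_factorizations_eq_mult_mon[symmetric] case_prod_beta)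
  also have "\<dots> = (\<Sum>u\<in>mons_le N. \<Sum>v\<in>mons_le N. \<Sum>p\<in>mons_le N. g v * (f p * f u * X p u v))"
    by (simp add: sum_distrib_left mult_ac)
  also have "\<dots> = (\<Sum>v\<in>mons_le N. \<Sum>p\<in>mons_le N. \<Sum>u\<in>mons_le N. g v * (f p * f u * X p u v))"
    by (rule sum.swap[THEN trans], rule sum.cong[OF refl sum.swap])
  also have "\<dots> = (\<Sum>v\<in>mons_le N. g v * (\<Sum>p\<in>mons_le N. \<Sum>u\<in>mons_le N. f p * f u * X p u v))"
    by (simp add: sum_distrib_left)
  also have "\<dots> = (\<Sum>v\<in>mons_le N. g v * mon v w)"
    unfolding X_def N_def by (simp add: group_like_sum_mult_ldiv_rec[OF assms(1)] assms(2))
  also have "\<dots> = g w"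
    using sum_delta_mult[of "mons_le N" w g] by (simp add: mon_def N_def eq_commute[of w] mult.commute)
  finally show "ser_mult f (ldiv f g) w = g w" .
qed

section \<open>Substitution\<close>

definition const_free :: "('v \<Rightarrow> ('w, 'a::zero) ser) \<Rightarrow> bool" where
  "const_free \<sigma> \<longleftrightarrow> (\<forall>v. \<sigma> v None = 0)"

lemma const_free_var: "const_free var"
  by (simp add: const_free_def var_def mon_def)

lemma const_free_fun_upd: "const_free \<sigma> \<Longrightarrow> T None = 0 \<Longrightarrow> const_free (\<sigma>(c := T))"
  by (simp add: const_free_def)

lemma eval_tree_None: "const_free \<sigma> \<Longrightarrow> eval_tree \<sigma> t None = 0"
  by (induction t) (auto simp: const_free_def ser_mult_None)

lemma eval_tree_vanish: "const_free \<sigma> \<Longrightarrow> deg w < tdeg t \<Longrightarrow> eval_tree \<sigma> t w = 0"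
proof (induction t arbitrary: w)
  case (MLeaf v) then show ?case by (auto simp: const_free_def deg_eq_0_iff)
next
  case (MNode a b)
  show ?case unfolding eval_tree.simps ser_mult_factorizations
  proof (rule sum.neutral, rule ballI)
    fix q assume q: "q \<in> factorizations w"
    obtain u1 u2 where q': "q = (u1, u2)" by fastforce
    with q have "deg u1 + deg u2 = deg w" using deg_factorization by blast
    with MNode.prems have "deg u1 < tdeg a \<or> deg u2 < tdeg b" by auto
    then show "(case q of (u, v) \<Rightarrow> eval_tree \<sigma> a u * eval_tree \<sigma> b v) = 0"
      using MNode.IH MNode.prems(1) q' by auto
  qed
qed

lemma eval_mon_vanish: "const_free \<sigma> \<Longrightarrow> deg w < deg m \<Longrightarrow> eval_mon \<sigma> m w = 0"
  by (cases m) (auto simp: eval_mon_def deg_def eval_tree_vanish)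

lemma eval_mon_None [simp]: "eval_mon \<sigma> None = mon None"
  by (simp add: eval_mon_def)

lemma eval_mon_Some [simp]: "eval_mon \<sigma> (Some t) = eval_tree \<sigma> t"
  by (simp add: eval_mon_def)

lemma subst_box:
  fixes \<sigma> :: "'v::finite \<Rightarrow> ('w, 'a::comm_ring_1) ser"
  assumes "const_free \<sigma>" "deg w \<le> N"
  shows "subst \<sigma> f w = (\<Sum>m\<in>mons_le N. f m * eval_mon \<sigma> m w)"
proof -
  have "subst \<sigma> f w = (\<Sum>m\<in>mons_le (deg w). f m * eval_mon \<sigma> m w)" by (simp add: subst_def mons_le_def)
  also have "\<dots> = (\<Sum>m\<in>mons_le N. f m * eval_mon \<sigma> m w)"
    by (rule sum_mons_le_cong) (use assms eval_mon_vanish[OF assms(1)] in auto)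
  finally show ?thesis .
qed

lemma eval_mon_mmul: "eval_mon \<sigma> (mmul p q) = ser_mult (eval_mon \<sigma> p) (eval_mon \<sigma> q)"
  by (cases p; cases q) (simp_all add: ser_mult_one_left ser_mult_one_right)

lemma subst_ser_mult_expand:
  fixes \<sigma> :: "'v::finite \<Rightarrow> ('w::finite, 'a::comm_ring_1) ser"
  assumes "const_free \<sigma>" and "deg w \<le> N"
  shows "subst \<sigma> (ser_mult f g) w =
    (\<Sum>p\<in>mons_le N. \<Sum>q\<in>mons_le N. f p * g q * ser_mult (eval_mon \<sigma> p) (eval_mon \<sigma> q) w)"
proof -
  have "subst \<sigma> (ser_mult f g) w = (\<Sum>m\<in>mons_le N. (\<Sum>(p, q)\<in>factorizations m. f p * g q) * eval_mon \<sigma> m w)"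
    by (simp add: subst_box[OF assms] ser_mult_factorizations)
  also have "\<dots> = (\<Sum>m\<in>mons_le N. \<Sum>(p, q)\<in>factorizations m. f p * g q * eval_mon \<sigma> (mmul p q) w)"
    by (rule sum.cong[OF refl]) (auto simp: sum_distrib_right factorizations_def intro!: sum.cong)
  also have "\<dots> = (\<Sum>p\<in>mons_le N. \<Sum>q\<in>mons_le N. f p * g q * eval_mon \<sigma> (mmul p q) w)"
  proof (rule sum_factorizations_reindex)
    fix p q assume "f p * g q * eval_mon \<sigma> (mmul p q) w \<noteq> 0"
    then have "eval_mon \<sigma> (mmul p q) w \<noteq> 0" by auto
    then show "deg p \<le> N \<and> deg q \<le> N \<and> deg p + deg q \<le> N"
      using eval_mon_vanish[OF assms(1), of w "mmul p q"] assms(2) by force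
  qed
  finally show ?thesis by (simp add: eval_mon_mmul)
qed

lemma subst_ser_mult:
  fixes \<sigma> :: "'v::finite \<Rightarrow> ('w::finite, 'a::comm_ring_1) ser"
  assumes "const_free \<sigma>"
  shows "subst \<sigma> (ser_mult f g) = ser_mult (subst \<sigma> f) (subst \<sigma> g)"
proof
  fix w :: "'w mon"
  define N where "N = deg w"
  define E where "E m = eval_mon \<sigma> m" for m
  have "subst \<sigma> (ser_mult f g) w =
      (\<Sum>p\<in>mons_le N. \<Sum>q\<in>mons_le N. \<Sum>x\<in>factorizations w. f p * E p (fst x) * (g q * E q (snd x)))"
    by (simp add: subst_ser_mult_expand[OF assms order.refl] N_def E_def ser_mult_factorizations
        sum_distrib_left case_prod_beta mult_ac)
  also have "\<dots> = (\<Sum>x\<in>factorizations w. \<Sum>p\<in>mons_le N. \<Sum>q\<in>mons_le N. f p * E p (fst x) * (g q * E q (snd x)))"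
    by (rule trans[OF sum.cong[OF refl sum.swap] sum.swap])
  also have "\<dots> = (\<Sum>x\<in>factorizations w. (\<Sum>p\<in>mons_le N. f p * E p (fst x)) * (\<Sum>q\<in>mons_le N. g q * E q (snd x)))"
    by (simp add: sum_product)
  also have "\<dots> = ser_mult (subst \<sigma> f) (subst \<sigma> g) w"
    unfolding ser_mult_factorizations
  proof (rule sum.cong[OF refl])
    fix x assume "x \<in> factorizations w"
    then have "deg (fst x) \<le> N" "deg (snd x) \<le> N"
      using deg_factorization[of "fst x" "snd x" w] by (auto simp: N_def)
    then show "(\<Sum>p\<in>mons_le N. f p * E p (fst x)) * (\<Sum>q\<in>mons_le N. g q * E q (snd x)) =
        (case x of (u, v) \<Rightarrow> subst \<sigma> f u * subst \<sigma> g v)"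
      by (simp add: case_prod_beta subst_box[OF assms] E_def)
  qed
  finally show "subst \<sigma> (ser_mult f g) w = ser_mult (subst \<sigma> f) (subst \<sigma> g) w" .
qed

lemma subst_None:
  fixes \<sigma> :: "'v::finite \<Rightarrow> ('w, 'a::comm_ring_1) ser"
  assumes "const_free \<sigma>" shows "subst \<sigma> g None = g None"
proof -
  have "subst \<sigma> g None = (\<Sum>m\<in>mons_le 0. g m * eval_mon \<sigma> m None)" by (rule subst_box[OF assms]) simp
  then show ?thesis by (simp add: mons_le_0 mon_def)
qed

lemma const_free_subst:
  fixes \<sigma> :: "'v::finite \<Rightarrow> ('w, 'a::comm_ring_1) ser"
  assumes "const_free \<sigma>" "const_free \<tau>" shows "const_free (\<lambda>v. subst \<sigma> (\<tau> v))"
  using assms by (simp add: const_free_def subst_None)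

lemma subst_mon_None:
  fixes \<sigma> :: "'v::finite \<Rightarrow> ('w, 'a::comm_ring_1) ser"
  assumes zs: "const_free \<sigma>" shows "subst \<sigma> (mon None) = mon None"
proof
  fix w
  have "subst \<sigma> (mon None) w = (\<Sum>m\<in>mons_le (deg w). (if m = None then 1 else 0) * eval_mon \<sigma> m w)"
    by (simp add: subst_box[OF zs order.refl] mon_def)
  also have "\<dots> = mon None w" by (simp add: mon_def[of None] sum_delta_mult)
  finally show "subst \<sigma> (mon None) w = mon None w" .
qed

lemma subst_eval_tree:
  fixes \<sigma> :: "'v::finite \<Rightarrow> ('w::finite, 'a::comm_ring_1) ser"
  assumes zs: "const_free \<sigma>"
  shows "subst \<sigma> (eval_tree \<tau> t) = eval_tree (\<lambda>v. subst \<sigma> (\<tau> v)) t"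
  by (induction t) (simp_all add: subst_ser_mult[OF zs])

lemma subst_eval_mon:
  fixes \<sigma> :: "'v::finite \<Rightarrow> ('w::finite, 'a::comm_ring_1) ser"
  assumes zs: "const_free \<sigma>"
  shows "subst \<sigma> (eval_mon \<tau> m) = eval_mon (\<lambda>v. subst \<sigma> (\<tau> v)) m"
  by (cases m) (simp_all add: subst_eval_tree[OF zs] subst_mon_None[OF zs])

lemma subst_comp:
  fixes \<sigma> :: "'v::finite \<Rightarrow> ('w::finite, 'a::comm_ring_1) ser" and \<tau> :: "'u::finite \<Rightarrow> ('v, 'a) ser"
  assumes zs: "const_free \<sigma>" and zt: "const_free \<tau>"
  shows "subst \<sigma> (subst \<tau> f) = subst (\<lambda>v. subst \<sigma> (\<tau> v)) f"
proof
  fix w :: "'w mon"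
  define N where "N = deg w"
  have "subst \<sigma> (subst \<tau> f) w = (\<Sum>n\<in>mons_le N. subst \<tau> f n * eval_mon \<sigma> n w)"
    by (rule subst_box[OF zs]) (simp add: N_def)
  also have "\<dots> = (\<Sum>n\<in>mons_le N. (\<Sum>m\<in>mons_le N. f m * eval_mon \<tau> m n) * eval_mon \<sigma> n w)"
    by (rule sum.cong[OF refl]) (simp add: subst_box[OF zt])
  also have "\<dots> = (\<Sum>n\<in>mons_le N. \<Sum>m\<in>mons_le N. f m * (eval_mon \<tau> m n * eval_mon \<sigma> n w))"
    by (rule sum.cong[OF refl]) (simp add: sum_distrib_right mult.assoc)
  also have "\<dots> = (\<Sum>m\<in>mons_le N. \<Sum>n\<in>mons_le N. f m * (eval_mon \<tau> m n * eval_mon \<sigma> n w))"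
    by (rule sum.swap)
  also have "\<dots> = (\<Sum>m\<in>mons_le N. f m * (\<Sum>n\<in>mons_le N. eval_mon \<tau> m n * eval_mon \<sigma> n w))"
    by (simp add: sum_distrib_left)
  also have "\<dots> = (\<Sum>m\<in>mons_le N. f m * subst \<sigma> (eval_mon \<tau> m) w)"
    by (rule sum.cong[OF refl]) (simp add: subst_box[OF zs, of w N] N_def)
  also have "\<dots> = (\<Sum>m\<in>mons_le N. f m * eval_mon (\<lambda>v. subst \<sigma> (\<tau> v)) m w)"
    by (simp add: subst_eval_mon[OF zs])
  also have "\<dots> = subst (\<lambda>v. subst \<sigma> (\<tau> v)) f w"
    by (rule subst_box[symmetric, OF const_free_subst[OF zs zt]]) (simp add: N_def)
  finally show "subst \<sigma> (subst \<tau> f) w = subst (\<lambda>v. subst \<sigma> (\<tau> v)) f w" .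
qed

lemma subst_var:
  fixes \<sigma> :: "'v::finite \<Rightarrow> ('w, 'a::comm_ring_1) ser"
  assumes zs: "const_free \<sigma>" shows "subst \<sigma> (var v) = \<sigma> v"
proof
  fix w
  have "subst \<sigma> (var v) w = (\<Sum>m\<in>mons_le (deg w + 1). (if m = Some (MLeaf v) then 1 else 0) * eval_mon \<sigma> m w)"
    by (simp add: subst_box[OF zs, of w "deg w + 1"] var_def mon_def)
  also have "\<dots> = \<sigma> v w" by (simp add: sum_delta_mult deg_def)
  finally show "subst \<sigma> (var v) w = \<sigma> v w" .
qed

lemma subst_add: "subst \<sigma> (\<lambda>w. f w + g w) = (\<lambda>w. subst \<sigma> f w + subst \<sigma> g w)"
  by (simp add: subst_def fun_eq_iff distrib_right sum.distrib)

definition rename :: "('v \<Rightarrow> 'w) \<Rightarrow> 'v mon \<Rightarrow> 'w mon" where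
  "rename g = map_option (map_ntree g)"

lemma rename_None [simp]: "rename g None = None"
  by (simp add: rename_def)

lemma rename_eq_None_iff [simp]: "rename g m = None \<longleftrightarrow> m = None"
  by (simp add: rename_def)

lemma deg_rename [simp]: "deg (rename g m) = deg m"
proof -
  have "tdeg (map_ntree g t) = tdeg t" for t by (induction t) auto
  then show ?thesis by (cases m) (simp_all add: rename_def deg_def)
qed

lemma rename_mmul: "rename g (mmul x y) = mmul (rename g x) (rename g y)"
  by (cases x; cases y) (auto simp: rename_def)

lemma inj_rename: "inj g \<Longrightarrow> inj (rename g)"
  unfolding rename_def by (intro option.inj_map ntree.inj_map)

lemma mmul_eq_rename:
  assumes "mmul p q = rename g m"
  obtains x y where "p = rename g x" "q = rename g y" "mmul x y = m"
proof (cases "p = None \<or> q = None")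
  case True
  then show ?thesis using assms that[of None m] that[of m None] by auto
next
  case False
  then obtain s t where st: "p = Some s" "q = Some t" by auto
  with assms obtain m1 m2 where "m = Some (MNode m1 m2)" "s = map_ntree g m1" "t = map_ntree g m2"
    by (cases m rule: mon_cases) (auto simp: rename_def)
  then show ?thesis using st that[of "Some m1" "Some m2"] by (simp add: rename_def)
qed

lemma factorizations_rename:
  assumes "inj g"
  shows "factorizations (rename g a) = map_prod (rename g) (rename g) ` factorizations a"
proof
  show "factorizations (rename g a) \<subseteq> map_prod (rename g) (rename g) ` factorizations a"
  proof clarify
    fix p q assume "(p, q) \<in> factorizations (rename g a)"
    then obtain x y where "p = rename g x" "q = rename g y" "mmul x y = a"
      by (auto simp: factorizations_def elim: mmul_eq_rename)
    then show "(p, q) \<in> map_prod (rename g) (rename g) ` factorizations a"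
      by (auto simp: factorizations_def)
  qed
qed (auto simp: factorizations_def rename_mmul)

lemma coprod_mon_rename:
  assumes "inj g"
  shows "(coprod_mon (rename g u) (rename g a, rename g b) :: 'a::comm_ring_1) = coprod_mon u (a, b)"
proof (cases u)
  case (Some t)
  have inj2: "inj (map_prod (rename g) (rename g))"
    using inj_rename[OF assms] by (auto simp: inj_on_def)
  have "(coprod_mon (rename g (Some t)) (rename g a, rename g b) :: 'a) = coprod_mon (Some t) (a, b)" for a b
  proof (induction t arbitrary: a b)
    case (MLeaf v)
    have leaf: "rename g (leaf v) = leaf (g v)" by (simp add: rename_def)
    show ?case
      using inj_eq[OF inj_rename[OF assms], of _ "leaf v"] unfolding leaf coprod_mon_leaf by simp
  next
    case (MNode s t)
    have node: "coprod_mon (rename g (Some (MNode s t))) =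
        tmult (coprod_mon (rename g (Some s))) (coprod_mon (rename g (Some t)))"
      by (simp add: rename_def coprod_mon_node)
    show ?case
      unfolding node tmult_factorizations factorizations_rename[OF assms]
      by (simp add: sum.reindex[OF inj_on_subset[OF inj2 subset_UNIV]] MNode.IH coprod_mon_node tmult_factorizations)
  qed
  then show ?thesis using Some by simp
qed (simp add: coprod_mon_None)


lemma coprod_mon_rename_range:
  assumes "(coprod_mon (rename g u) (a, b) :: 'a::comm_ring_1) \<noteq> 0"
  shows "a \<in> range (rename g) \<and> b \<in> range (rename g)"
proof (cases u)
  case None
  then show ?thesis using assms by (auto simp: coprod_mon_None split: if_splits intro: range_eqI[of _ _ None])
next
  case (Some t)
  have "(coprod_mon (rename g (Some t)) (a, b) :: 'a) \<noteq> 0 \<Longrightarrow> a \<in> range (rename g) \<and> b \<in> range (rename g)"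
    for a b
  proof (induction t arbitrary: a b)
    case (MLeaf v)
    then show ?case
      by (auto simp: rename_def coprod_mon_leaf split: if_splits
          intro: range_eqI[of _ _ None] range_eqI[of _ _ "leaf v"])
  next
    case (MNode s t)
    from MNode.prems obtain p q where pq: "p \<in> factorizations a" "q \<in> factorizations b"
      and nz: "coprod_mon (rename g (Some s)) (fst p, fst q) * coprod_mon (rename g (Some t)) (snd p, snd q) \<noteq> (0::'a)"
      by (auto simp: rename_def coprod_mon_node tmult_factorizations elim!: sum.not_neutral_contains_not_neutral)
    then obtain x1 x2 y1 y2 where "fst p = rename g x1" "snd p = rename g x2" "fst q = rename g y1" "snd q = rename g y2"
      using MNode.IH[of "fst p" "fst q"] MNode.IH[of "snd p" "snd q"] by (metis mult_zero_left mult_zero_right rangeE)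
    then have "a = rename g (mmul x1 x2)" "b = rename g (mmul y1 y2)"
      using pq by (auto simp: factorizations_def rename_mmul case_prod_beta)
    then show ?case by blast
  qed
  then show ?thesis using assms Some by simp
qed

lemma eval_mon_var_rename: "(eval_mon (\<lambda>v. var (g v)) m :: ('w, 'a::comm_ring_1) ser) = mon (rename g m)"
proof -
  have "(eval_tree (\<lambda>v. var (g v)) t :: ('w, 'a) ser) = mon (Some (map_ntree g t))" for t
    by (induction t) (simp_all add: var_def ser_mult_mon)
  then show ?thesis by (cases m) (simp_all add: rename_def)
qed

lemma const_free_var_comp: "const_free (\<lambda>v. var (g v))"
  by (simp add: const_free_def var_def mon_def)

lemma subst_var_rename_box:
  fixes e :: "('v::finite, 'a::comm_ring_1) ser"
  assumes "deg w \<le> N"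
  shows "subst (\<lambda>v. var (g v)) e w = (\<Sum>m\<in>mons_le N. e m * mon (rename g m) w)"
  by (simp add: subst_box[OF const_free_var_comp assms] eval_mon_var_rename)

lemma subst_var_rename_at_rename:
  fixes e :: "('v::finite, 'a::comm_ring_1) ser"
  assumes "inj g"
  shows "subst (\<lambda>v. var (g v)) e (rename g m) = e m"
proof -
  have "subst (\<lambda>v. var (g v)) e (rename g m) = (\<Sum>m'\<in>mons_le (deg m). e m' * (if m = m' then 1 else 0))"
    using inj_eq[OF inj_rename[OF assms]] by (simp add: subst_var_rename_box[OF order.refl] mon_def)
  also have "\<dots> = e m" by (simp add: mult.commute[of "e _"] sum_delta_mult eq_commute[of m])
  finally show ?thesis .
qed

lemma subst_var_rename_outside_range:
  "w \<notin> range (rename g) \<Longrightarrow> subst (\<lambda>v. var (g v)) (e :: ('v::finite, 'a::comm_ring_1) ser) w = 0"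
  by (simp add: subst_var_rename_box[OF order.refl] mon_def) (auto intro!: sum.neutral)


lemma coprod_subst_var_rename_outside_range:
  fixes e :: "('v::finite, 'a::comm_ring_1) ser" and g :: "'v \<Rightarrow> 'w::finite"
  assumes "a \<notin> range (rename g) \<or> b \<notin> range (rename g)"
  shows "coprod (subst (\<lambda>v. var (g v)) e) (a, b) = 0"
proof -
  have "subst (\<lambda>v. var (g v)) e w * coprod_mon w (a, b) = 0" for w
  proof (cases "w \<in> range (rename g)")
    case True
    then obtain m where "w = rename g m" by blast
    then have "coprod_mon w (a, b) = (0::'a)" using assms coprod_mon_rename_range[of g m a b] by blast
    then show ?thesis by simp
  qed (simp add: subst_var_rename_outside_range)
  then show ?thesis by (simp add: coprod_def)
qed

lemma coprod_subst_var_rename: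
  fixes e :: "('v::finite, 'a::comm_ring_1) ser" and g :: "'v \<Rightarrow> 'w::finite"
  assumes "inj g"
  shows "coprod (subst (\<lambda>v. var (g v)) e) (rename g a, rename g b) = coprod e (a, b)"
proof -
  define n where "n = deg a + deg b"
  let ?S = "subst (\<lambda>v. var (g v)) e"
  have "finite {w :: 'w mon. deg w = n}" by (rule finite_subset[of _ "mons_le n"]) auto
  have "coprod ?S (rename g a, rename g b) = (\<Sum>w\<in>{w. deg w = n}. ?S w * coprod_mon w (rename g a, rename g b))"
    by (simp add: coprod_def n_def)
  also have "\<dots> = (\<Sum>w\<in>rename g ` {m. deg m = n}. ?S w * coprod_mon w (rename g a, rename g b))"
  proof (rule sum.mono_neutral_right)
    show "\<forall>w\<in>{w. deg w = n} - rename g ` {m. deg m = n}. ?S w * coprod_mon w (rename g a, rename g b) = 0"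
    proof
      fix w assume "w \<in> {w. deg w = n} - rename g ` {m. deg m = n}"
      then have "w \<notin> range (rename g)" by auto
      then show "?S w * coprod_mon w (rename g a, rename g b) = 0" by (simp add: subst_var_rename_outside_range)
    qed
  qed (use \<open>finite {w. deg w = n}\<close> in auto)
  also have "\<dots> = (\<Sum>m\<in>{m. deg m = n}. e m * coprod_mon m (a, b))"
    using inj_rename[OF assms]
    by (simp add: sum.reindex inj_on_subset subst_var_rename_at_rename[OF assms] coprod_mon_rename[OF assms])
  also have "\<dots> = coprod e (a, b)" by (simp add: coprod_def n_def)
  finally show ?thesis .
qed

lemma group_like_subst_var_rename:
  fixes e :: "('v::finite, 'a::comm_ring_1) ser" and g :: "'v \<Rightarrow> 'w::finite"
  assumes "inj g" and "coprod e = tensor e e"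
  shows "coprod (subst (\<lambda>v. var (g v)) e) = tensor (subst (\<lambda>v. var (g v)) e) (subst (\<lambda>v. var (g v)) e)"
proof (intro ext, clarify)
  fix a b :: "'w mon"
  show "coprod (subst (\<lambda>v. var (g v)) e) (a, b) = tensor (subst (\<lambda>v. var (g v)) e) (subst (\<lambda>v. var (g v)) e) (a, b)"
  proof (cases "a \<in> range (rename g) \<and> b \<in> range (rename g)")
    case True
    then obtain a' b' where "a = rename g a'" "b = rename g b'" by blast
    then show ?thesis using assms(2)
      by (simp add: coprod_subst_var_rename[OF assms(1)] subst_var_rename_at_rename[OF assms(1)] tensor_def)
  next
    case False
    then show ?thesis
      by (auto simp: coprod_subst_var_rename_outside_range tensor_def subst_var_rename_outside_range)
  qed
qed

lemma ydeg_None [simp]: "ydeg None = 0"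
  by (simp add: ydeg_def)

lemma ydeg_mmul [simp]: "ydeg (mmul a b) = ydeg a + ydeg b"
  by (cases a; cases b) (auto simp: ydeg_def)

lemma ydeg_factorization: "(u, v) \<in> factorizations w \<Longrightarrow> ydeg u + ydeg v = ydeg w"
  by (auto simp: factorizations_def)

lemma ydeg_rename_Y [simp]: "ydeg (rename (\<lambda>_. Y) m) = deg m"
proof -
  have "ydeg_tree (map_ntree (\<lambda>_. Y) t) = tdeg t" for t by (induction t) auto
  then show ?thesis by (cases m) (simp_all add: rename_def ydeg_def deg_def)
qed

lemma ser_mult_cong_ydeg_le_1:
  assumes "\<And>w'. ydeg w' \<le> 1 \<Longrightarrow> g w' = g' w'" and "ydeg w \<le> 1"
  shows "ser_mult f g w = ser_mult f g' w"
  unfolding ser_mult_factorizations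
proof (rule sum.cong[OF refl])
  fix q assume "q \<in> factorizations w"
  then have "ydeg (snd q) \<le> 1" using ydeg_factorization[of "fst q" "snd q" w] assms(2) by auto
  then show "(case q of (u, v) \<Rightarrow> f u * g v) = (case q of (u, v) \<Rightarrow> f u * g' v)"
    using assms(1) by (simp add: case_prod_beta)
qed

lemma eval_tree_ydeg:
  assumes "\<And>v w'. \<sigma> v w' \<noteq> 0 \<Longrightarrow> ydeg_tree (MLeaf v) \<le> ydeg w'"
    and "(eval_tree \<sigma> t w :: 'a::comm_ring_1) \<noteq> 0"
  shows "ydeg_tree t \<le> ydeg w"
  using assms(2)
proof (induction t arbitrary: w)
  case (MLeaf v) then show ?case using assms(1) by simp
next
  case (MNode a b)
  from MNode.prems obtain u v where uv: "(u, v) \<in> factorizations w"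
    and "eval_tree \<sigma> a u * eval_tree \<sigma> b v \<noteq> (0::'a)"
    unfolding eval_tree.simps ser_mult_factorizations by (auto elim: sum.not_neutral_contains_not_neutral)
  then have "eval_tree \<sigma> a u \<noteq> (0::'a)" "eval_tree \<sigma> b v \<noteq> (0::'a)" by auto
  then have "ydeg_tree a \<le> ydeg u" "ydeg_tree b \<le> ydeg v" by (simp_all add: MNode.IH)
  then show ?case using ydeg_factorization[OF uv] by simp
qed

lemma eval_tree_y_zero:
  "(eval_tree (var(Y := \<lambda>_. 0)) t :: (xy, 'a::comm_ring_1) ser) = (if ydeg_tree t = 0 then mon (Some t) else (\<lambda>_. 0))"
proof (induction t)
  case (MLeaf v) then show ?case by (cases v) (auto simp: var_def)
next
  case (MNode a b) then show ?case by (auto simp: ser_mult_mon)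
qed

lemma subst_y_zero: "subst (var(Y := \<lambda>_. 0)) F w = (if ydeg w = 0 then F w else (0::'a::comm_ring_1))"
proof -
  have "eval_mon (var(Y := \<lambda>_. 0)) m w = (if ydeg m = 0 then mon m w else (0::'a))" for m
    by (cases m) (simp_all add: eval_tree_y_zero ydeg_def)
  then have "subst (var(Y := \<lambda>_. 0)) F w = (\<Sum>m\<in>mons_le (deg w). F m * (if ydeg m = 0 then mon m w else 0))"
    by (simp add: subst_box[OF const_free_fun_upd[OF const_free_var] order.refl])
  also have "\<dots> = (\<Sum>m\<in>mons_le (deg w). if m = w then (if ydeg w = 0 then F w else 0) else 0)"
    by (rule sum.cong) (auto simp: mon_def)
  finally show ?thesis by simp
qed


lemma subst_ydeg_vanish:
  assumes "\<And>v w'. \<sigma> v w' \<noteq> 0 \<Longrightarrow> ydeg_tree (MLeaf v) \<le> ydeg w'"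
    and "\<And>m. ydeg m \<le> ydeg w \<Longrightarrow> F m = 0"
  shows "subst \<sigma> F w = (0::'a::comm_ring_1)"
  unfolding subst_def
proof (rule sum.neutral, rule ballI)
  fix m :: "xy mon" assume "m \<in> {m. deg m \<le> deg w}"
  show "F m * eval_mon \<sigma> m w = 0"
  proof (cases m)
    case (Some t)
    have "eval_tree \<sigma> t w = 0" if "F m \<noteq> 0"
      using that assms eval_tree_ydeg[of \<sigma> t w] Some by (force simp: ydeg_def)
    then show ?thesis using Some by (cases "F m = 0") simp_all
  qed (simp add: assms(2))
qed

section \<open>Triangular systems\<close>

lemma eval_tree_cong_lower:
  assumes "\<And>v w'. deg w' \<le> n \<Longrightarrow> ydeg w' \<le> k \<Longrightarrow> \<sigma> v w' = \<sigma>' v w'"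
  shows "deg w \<le> n \<Longrightarrow> ydeg w \<le> k \<Longrightarrow> eval_tree \<sigma> t w = (eval_tree \<sigma>' t w :: 'a::comm_ring_1)"
proof (induction t arbitrary: w)
  case (MLeaf v) then show ?case using assms by simp
next
  case (MNode a b)
  show ?case unfolding eval_tree.simps ser_mult_factorizations
  proof (rule sum.cong[OF refl])
    fix q assume q: "q \<in> factorizations w"
    obtain u1 u2 where q': "q = (u1, u2)" by fastforce
    have "deg u1 \<le> n" "deg u2 \<le> n" "ydeg u1 \<le> k" "ydeg u2 \<le> k"
      using deg_factorization[of u1 u2 w] ydeg_factorization[of u1 u2 w] q q' MNode.prems by auto
    then show "(case q of (u, v) \<Rightarrow> eval_tree \<sigma> a u * eval_tree \<sigma> b v) = (case q of (u, v) \<Rightarrow> eval_tree \<sigma>' a u * eval_tree \<sigma>' b v)"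
      using MNode.IH q' by simp
  qed
qed

lemma eval_tree_node_cong_lower:
  fixes \<sigma> \<sigma>' :: "'v \<Rightarrow> (xy, 'a::comm_ring_1) ser"
  assumes "const_free \<sigma>" "const_free \<sigma>'"
    and agree: "\<And>v w'. deg w' < deg w \<Longrightarrow> ydeg w' \<le> ydeg w \<Longrightarrow> \<sigma> v w' = \<sigma>' v w'"
  shows "eval_tree \<sigma> (MNode a b) w = eval_tree \<sigma>' (MNode a b) w"
  unfolding eval_tree.simps ser_mult_factorizations
proof (rule sum.cong[OF refl])
  fix q assume q: "q \<in> factorizations w"
  obtain u1 u2 where q': "q = (u1, u2)" by fastforce
  show "(case q of (u, v) \<Rightarrow> eval_tree \<sigma> a u * eval_tree \<sigma> b v) = (case q of (u, v) \<Rightarrow> eval_tree \<sigma>' a u * eval_tree \<sigma>' b v)"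
  proof (cases "u1 = None \<or> u2 = None")
    case True then show ?thesis using q' eval_tree_None[OF assms(1)] eval_tree_None[OF assms(2)] by auto
  next
    case False
    then have "deg u1 \<ge> 1" "deg u2 \<ge> 1" using deg_eq_0_iff by (auto simp: Suc_le_eq)
    moreover have "deg u1 + deg u2 = deg w" "ydeg u1 + ydeg u2 = ydeg w"
      using deg_factorization[of u1 u2 w] ydeg_factorization[of u1 u2 w] q q' by auto
    ultimately have le: "deg u1 \<le> deg w - 1" "deg u2 \<le> deg w - 1" "ydeg u1 \<le> ydeg w" "ydeg u2 \<le> ydeg w" by auto
    have ag: "\<And>v w'. deg w' \<le> deg w - 1 \<Longrightarrow> ydeg w' \<le> ydeg w \<Longrightarrow> \<sigma> v w' = \<sigma>' v w'"
    proof -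
      fix v w' assume "deg w' \<le> deg w - 1" "ydeg w' \<le> ydeg w"
      moreover have "deg w \<ge> 1" using \<open>deg u1 \<ge> 1\<close> \<open>deg u1 + deg u2 = deg w\<close> by linarith
      ultimately show "\<sigma> v w' = \<sigma>' v w'" by (intro agree) auto
    qed
    show ?thesis using q' eval_tree_cong_lower[OF ag le(1,3), where t=a] eval_tree_cong_lower[OF ag le(2,4), where t=b] by simp
  qed
qed

definition lower_determined :: "((xy, 'a::comm_ring_1) ser \<Rightarrow> xy mon \<Rightarrow> 'a) \<Rightarrow> bool" where
  "lower_determined G \<longleftrightarrow> (\<forall>u u' w. u None = 0 \<longrightarrow> u' None = 0 \<longrightarrow>
      (\<forall>w'. deg w' < deg w \<longrightarrow> ydeg w' \<le> ydeg w \<longrightarrow> u w' = u' w') \<longrightarrow> G u w = G u' w)"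

lemma lower_determinedD: "lower_determined G \<Longrightarrow> u None = 0 \<Longrightarrow> u' None = 0 \<Longrightarrow>
   (\<And>w'. deg w' < deg w \<Longrightarrow> ydeg w' \<le> ydeg w \<Longrightarrow> u w' = u' w') \<Longrightarrow> G u w = G u' w"
  unfolding lower_determined_def by blast

lemma triangular_unique_upto:
  assumes G: "lower_determined G" and u0: "u None = 0" and u'0: "u' None = 0"
    and eq: "\<And>w. w \<noteq> None \<Longrightarrow> ydeg w \<le> K \<Longrightarrow> u w + G u w = u' w + G u' w"
  shows "ydeg w \<le> K \<Longrightarrow> u w = u' w"
proof (induction "deg w" arbitrary: w rule: less_induct)
  case less
  show ?case
  proof (cases "w = None")
    case True then show ?thesis using u0 u'0 by simp
  next
    case False
    have "G u w = G u' w"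
    proof (rule lower_determinedD[where u=u and u'=u', OF G u0 u'0])
      fix w' :: "xy mon" assume "deg w' < deg w" "ydeg w' \<le> ydeg w"
      then show "u w' = u' w'" using less.prems by (intro less.hyps) auto
    qed
    then show ?thesis using eq[OF False less.prems] by simp
  qed
qed

lemma triangular_unique:
  assumes G: "lower_determined G" and u0: "u None = 0" and u'0: "u' None = 0"
    and eq: "\<And>w. w \<noteq> None \<Longrightarrow> u w + G u w = u' w + G u' w"
  shows "u = u'"
proof
  fix w
  show "u w = u' w"
    by (rule triangular_unique_upto[where u=u and u'=u' and K="ydeg w", OF G u0 u'0]) (use eq in auto)
qed

fun triangular_iter :: "((xy, 'a::comm_ring_1) ser \<Rightarrow> xy mon \<Rightarrow> 'a) \<Rightarrow> (xy, 'a) ser \<Rightarrow> nat \<Rightarrow> (xy, 'a) ser" where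
  "triangular_iter G f 0 = (\<lambda>_. 0)"
| "triangular_iter G f (Suc k) = (\<lambda>w. if w = None then 0 else f w - G (triangular_iter G f k) w)"

lemma triangular_iter_None: "triangular_iter G f k None = 0"
  by (cases k) auto

lemma triangular_iter_stable:
  assumes G: "lower_determined G"
  shows "deg w < k \<Longrightarrow> k \<le> j \<Longrightarrow> triangular_iter G f k w = triangular_iter G f j w"
proof (induction k arbitrary: w j)
  case 0 then show ?case by simp
next
  case (Suc k)
  then obtain j' where j: "j = Suc j'" "k \<le> j'" by (cases j) auto
  have "G (triangular_iter G f k) w = G (triangular_iter G f j') w"
  proof (rule lower_determinedD[where u="triangular_iter G f k" and u'="triangular_iter G f j'",
        OF G triangular_iter_None triangular_iter_None])
    fix w' :: "xy mon" assume "deg w' < deg w"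
    then have "deg w' < k" using Suc.prems by simp
    then show "triangular_iter G f k w' = triangular_iter G f j' w'" using j(2) by (rule Suc.IH)
  qed
  then show ?case using j by simp
qed

lemma triangular_exists:
  assumes G: "lower_determined G"
  shows "\<exists>u. u None = 0 \<and> (\<forall>w. w \<noteq> None \<longrightarrow> u w + G u w = f w)"
proof -
  define u where "u w = triangular_iter G f (Suc (deg w)) w" for w
  have u0: "u None = 0" by (simp add: u_def)
  have "u w + G u w = f w" if "w \<noteq> None" for w
  proof -
    have "G u w = G (triangular_iter G f (deg w)) w"
    proof (rule lower_determinedD[where u=u and u'="triangular_iter G f (deg w)", OF G u0 triangular_iter_None])
      fix w' :: "xy mon" assume w': "deg w' < deg w"
      show "u w' = triangular_iter G f (deg w) w'"
        unfolding u_def by (rule triangular_iter_stable[OF G]) (use w' in auto)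
    qed
    moreover have "u w = f w - G (triangular_iter G f (deg w)) w"
      unfolding u_def triangular_iter.simps if_not_P[OF that] ..
    ultimately show ?thesis by simp
  qed
  then show ?thesis using u0 by blast
qed

lemma triangular_ex1:
  assumes G: "lower_determined G"
  shows "\<exists>!u. u None = 0 \<and> (\<forall>w. w \<noteq> None \<longrightarrow> u w + G u w = f w)"
proof -
  from triangular_exists[OF G, of f] obtain u
    where u: "u None = 0 \<and> (\<forall>w. w \<noteq> None \<longrightarrow> u w + G u w = f w)" ..
  show ?thesis
  proof (rule ex1I[of _ u])
    fix u' assume u': "u' None = 0 \<and> (\<forall>w. w \<noteq> None \<longrightarrow> u' w + G u' w = f w)"
    show "u' = u"
      by (rule triangular_unique[OF G]) (use u u' in auto)
  qed (rule u)
qed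


definition subst_tail :: "('v::finite \<Rightarrow> (xy, 'a::comm_ring_1) ser) \<Rightarrow> 'v \<Rightarrow> ('v, 'a) ser \<Rightarrow> xy mon \<Rightarrow> 'a" where
  "subst_tail \<sigma> c F w = (\<Sum>m\<in>mons_le (deg w) - {leaf c}. F m * eval_mon \<sigma> m w)"

lemma subst_fun_upd_split:
  fixes \<sigma> :: "'v::finite \<Rightarrow> (xy, 'a::comm_ring_1) ser"
  assumes "const_free \<sigma>" and "T None = 0" and "F (leaf c) = 1" and "w \<noteq> None"
  shows "subst (\<sigma>(c := T)) F w = T w + subst_tail (\<sigma>(c := T)) c F w"
proof -
  have "leaf c \<in> mons_le (deg w)" using assms(4) deg_eq_0_iff[of w] by auto
  then have "subst (\<sigma>(c := T)) F w = F (leaf c) * eval_mon (\<sigma>(c := T)) (leaf c) w + subst_tail (\<sigma>(c := T)) c F w"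
    unfolding subst_tail_def subst_box[OF const_free_fun_upd[of \<sigma> T, OF assms(1,2)] order.refl]
    by (rule sum.remove[OF finite_mons_le])
  then show ?thesis using assms(3) by simp
qed

lemma lower_determined_subst_tail:
  fixes \<sigma> :: "'v::finite \<Rightarrow> (xy, 'a::comm_ring_1) ser"
  assumes "const_free \<sigma>"
  shows "lower_determined (\<lambda>T. subst_tail (\<sigma>(c := T)) c F)"
  unfolding lower_determined_def
proof (intro allI impI)
  fix u u' :: "(xy, 'a) ser" and w :: "xy mon"
  assume u0: "u None = 0" and u'0: "u' None = 0"
    and agree: "\<forall>w'. deg w' < deg w \<longrightarrow> ydeg w' \<le> ydeg w \<longrightarrow> u w' = u' w'"
  show "subst_tail (\<sigma>(c := u)) c F w = subst_tail (\<sigma>(c := u')) c F w"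
    unfolding subst_tail_def
  proof (rule sum.cong[OF refl])
    fix m assume m: "m \<in> mons_le (deg w) - {leaf c}"
    show "F m * eval_mon (\<sigma>(c := u)) m w = F m * eval_mon (\<sigma>(c := u')) m w"
    proof (cases m rule: mon_cases)
      case (3 a b)
      have "eval_tree (\<sigma>(c := u)) (MNode a b) w = eval_tree (\<sigma>(c := u')) (MNode a b) w"
        by (rule eval_tree_node_cong_lower[OF const_free_fun_upd[of \<sigma> u, OF assms u0]
              const_free_fun_upd[of \<sigma> u', OF assms u'0]])
          (use agree in auto)
      then show ?thesis using 3 by simp
    qed (use m in auto)
  qed
qed

lemma subst_fun_upd_ex1:
  fixes \<sigma> :: "'v::finite \<Rightarrow> (xy, 'a::comm_ring_1) ser"
  assumes "const_free \<sigma>" and "F (leaf c) = 1" and "f None = F None"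
  shows "\<exists>!T. T None = 0 \<and> subst (\<sigma>(c := T)) F = f"
proof -
  have "subst (\<sigma>(c := T)) F = f \<longleftrightarrow> (\<forall>w. w \<noteq> None \<longrightarrow> T w + subst_tail (\<sigma>(c := T)) c F w = f w)"
    if "T None = 0" for T
  proof
    assume "subst (\<sigma>(c := T)) F = f"
    then show "\<forall>w. w \<noteq> None \<longrightarrow> T w + subst_tail (\<sigma>(c := T)) c F w = f w"
      using subst_fun_upd_split[of \<sigma> T F c, OF assms(1) that assms(2)] by auto
  next
    assume eq: "\<forall>w. w \<noteq> None \<longrightarrow> T w + subst_tail (\<sigma>(c := T)) c F w = f w"
    show "subst (\<sigma>(c := T)) F = f"
    proof
      fix w show "subst (\<sigma>(c := T)) F w = f w"
        using eq subst_fun_upd_split[of \<sigma> T F c, OF assms(1) that assms(2)] assms(3)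
          subst_None[OF const_free_fun_upd[of \<sigma> T, OF assms(1) that]]
        by (cases "w = None") auto
    qed
  qed
  then show ?thesis
    using triangular_ex1[OF lower_determined_subst_tail[of \<sigma> c F, OF assms(1)], where f=f]
    by (metis (no_types, lifting))
qed

lemma subst_fun_upd_unique_ydeg_le:
  fixes \<sigma> :: "'v::finite \<Rightarrow> (xy, 'a::comm_ring_1) ser"
  assumes "const_free \<sigma>" and "F (leaf c) = 1" and "T None = 0" and "T' None = 0"
    and "\<And>w. ydeg w \<le> K \<Longrightarrow> subst (\<sigma>(c := T)) F w = subst (\<sigma>(c := T')) F w"
    and "ydeg w \<le> K"
  shows "T w = T' w"
proof (rule triangular_unique_upto[where u=T and u'=T' and K=K,
      OF lower_determined_subst_tail[of \<sigma> c F, OF assms(1)] assms(3,4) _ assms(6)])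
  fix w :: "xy mon" assume w: "w \<noteq> None" "ydeg w \<le> K"
  have "T w + subst_tail (\<sigma>(c := T)) c F w = subst (\<sigma>(c := T)) F w"
    by (rule subst_fun_upd_split[of \<sigma> T F c w, OF assms(1,3,2) w(1), symmetric])
  also have "\<dots> = subst (\<sigma>(c := T')) F w" using assms(5) w(2) .
  also have "\<dots> = T' w + subst_tail (\<sigma>(c := T')) c F w"
    by (rule subst_fun_upd_split[of \<sigma> T' F c w, OF assms(1,4,2) w(1)])
  finally show "T w + subst_tail (\<sigma>(c := T)) c F w = T' w + subst_tail (\<sigma>(c := T')) c F w" .
qed

section \<open>Logarithms and the inverse of \<tau>\<close>

lemma apply_base_eq_subst: "apply_base e u = subst ((\<lambda>_. \<lambda>_. 0)(() := u)) e"
proof -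
  have "(\<lambda>_. \<lambda>_. 0)(() := u) = (\<lambda>_. u)" by (rule ext) simp
  then show ?thesis by (simp add: apply_base_def)
qed

lemma const_free_zero: "const_free (\<lambda>_. \<lambda>_. 0)"
  by (simp add: const_free_def)

lemma apply_base_None: "u None = 0 \<Longrightarrow> apply_base e u None = e None"
  by (simp add: apply_base_eq_subst subst_None const_free_fun_upd[OF const_free_zero])

lemma subst_apply_base:
  fixes \<sigma> :: "xy \<Rightarrow> (xy, 'a::comm_ring_1) ser"
  assumes "const_free \<sigma>" and "u None = 0"
  shows "subst \<sigma> (apply_base e u) = apply_base e (subst \<sigma> u)"
  using subst_comp[OF assms(1), of "\<lambda>_. u" e] assms by (simp add: apply_base_def const_free_def)

lemma log_base_spec:
  fixes e :: "(unit, 'a::comm_ring_1) ser" and f :: "(xy, 'a) ser"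
  assumes "e None = 1" and "e (leaf ()) = 1" and "f None = 1"
  shows "log_base e f None = 0 \<and> apply_base e (log_base e f) = f"
proof -
  have "\<exists>!u. u None = 0 \<and> apply_base e u = f"
    unfolding apply_base_eq_subst by (rule subst_fun_upd_ex1[OF const_free_zero]) (use assms in auto)
  then show ?thesis unfolding log_base_def by (rule theI')
qed

lemma apply_base_unique_ydeg_le:
  fixes e :: "(unit, 'a::comm_ring_1) ser" and u u' :: "(xy, 'a) ser"
  assumes "e (leaf ()) = 1" and "u None = 0" and "u' None = 0"
    and "\<And>w. ydeg w \<le> K \<Longrightarrow> apply_base e u w = apply_base e u' w" and "ydeg w \<le> K"
  shows "u w = u' w"
  by (rule subst_fun_upd_unique_ydeg_le[OF const_free_zero, of e "()" u u' K])
    (use assms in \<open>simp_all add: apply_base_eq_subst\<close>)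

lemma tau_inv_spec:
  fixes e :: "(unit, 'a::comm_ring_1) ser"
  assumes "tau e None = 0" and "tau e (leaf Y) = 1"
  shows "tau_inv e None = 0 \<and> subst (var(Y := tau_inv e)) (tau e) = var Y"
proof -
  have y_to: "(\<lambda>v. if v = X then var X else T) = var(Y := T)" for T :: "(xy, 'a) ser"
  proof
    fix v show "(if v = X then var X else T) = (var(Y := T)) v" by (cases v) simp_all
  qed
  have "\<exists>!T. T None = 0 \<and> subst (var(Y := T)) (tau e) = var Y"
    by (rule subst_fun_upd_ex1[OF const_free_var]) (use assms in \<open>auto simp: var_def mon_def\<close>)
  then show ?thesis unfolding tau_inv_def y_to by (rule theI')
qed

abbreviation e_at_x :: "(unit, 'a::comm_ring_1) ser \<Rightarrow> (xy, 'a) ser" where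
  "e_at_x e \<equiv> apply_base e (var X)"

abbreviation e_at_x_plus_y :: "(unit, 'a::comm_ring_1) ser \<Rightarrow> (xy, 'a) ser" where
  "e_at_x_plus_y e \<equiv> apply_base e (\<lambda>w. var X w + var Y w)"

lemma const_free_x_plus_y: "const_free (\<lambda>_ :: unit. (\<lambda>w. var X w + var Y w) :: (xy, 'a::comm_ring_1) ser)"
  by (simp add: const_free_def var_def mon_def)

lemma unit_mon_deg_le_1: "deg (m :: unit mon) \<le> 1 \<Longrightarrow> m = None \<or> m = leaf ()"
proof (cases m rule: mon_cases)
  case (3 a b)
  then show "deg m \<le> 1 \<Longrightarrow> ?thesis" using tdeg_ge_1[of a] tdeg_ge_1[of b] by (simp add: deg_def)
qed auto

context
  fixes e :: "(unit, 'a::comm_ring_1) ser"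
  assumes normalized: "normalized_base e"
begin

lemma e_group_like: "coprod e = tensor e e"
  using normalized by (simp add: normalized_base_def base_for_logs_def group_like_def)

lemma e_None: "e None = 1"
  using normalized by (simp add: normalized_base_def base_for_logs_def group_like_def counit_def)

lemma e_leaf: "e (leaf ()) = 1"
  using normalized by (simp add: normalized_base_def var_def mon_def)

lemma e_at_x_None: "e_at_x e None = 1"
  by (simp add: apply_base_None var_def mon_def e_None)

lemma e_at_x_group_like: "coprod (e_at_x e) = tensor (e_at_x e) (e_at_x e)"
proof -
  have "inj (\<lambda>_ :: unit. X)" by (simp add: inj_def)
  then show ?thesis
    unfolding apply_base_def using group_like_subst_var_rename[OF _ e_group_like] by blast
qed

lemma e_at_x_mult_tau: "ser_mult (e_at_x e) (tau e) = ds_at0 (e_at_x_plus_y e)"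
  unfolding tau_def by (rule ser_mult_ldiv_cancel[OF e_at_x_group_like e_at_x_None])

lemma e_at_x_plus_y_y_zero: "subst (var(Y := \<lambda>_. 0)) (e_at_x_plus_y e) = e_at_x e"
proof -
  have "subst (var(Y := \<lambda>_. 0)) (\<lambda>w. var X w + var Y w) = (var X :: (xy, 'a) ser)"
    by (simp add: subst_add subst_var[OF const_free_fun_upd[OF const_free_var]])
  then show ?thesis
    by (simp add: subst_apply_base[OF const_free_fun_upd[OF const_free_var]] var_def mon_def)
qed

lemma e_at_x_plus_y_ydeg_0: "ydeg w = 0 \<Longrightarrow> e_at_x_plus_y e w = e_at_x e w"
  using fun_cong[OF e_at_x_plus_y_y_zero, of w] by (simp add: subst_y_zero)

lemma e_at_x_ydeg_pos: "ydeg w \<noteq> 0 \<Longrightarrow> e_at_x e w = 0"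
  using fun_cong[OF e_at_x_plus_y_y_zero, of w] by (simp add: subst_y_zero)

lemma e_at_x_plus_y_leaf_Y: "e_at_x_plus_y e (leaf Y) = 1"
proof -
  have "mons_le 1 = {None, leaf ()}" using unit_mon_deg_le_1 by fastforce
  moreover have "e_at_x_plus_y e (leaf Y) =
      (\<Sum>m\<in>mons_le 1. e m * eval_mon (\<lambda>_. \<lambda>w. var X w + var Y w) m (leaf Y))"
    unfolding apply_base_def by (rule subst_box[OF const_free_x_plus_y]) simp
  ultimately show ?thesis by (simp add: e_leaf var_def mon_def)
qed


lemma tau_None: "tau e None = 0"
  using fun_cong[OF e_at_x_mult_tau, of None] by (simp add: ser_mult_None e_at_x_None ds_at0_def)

lemma tau_leaf_Y: "tau e (leaf Y) = 1"
  using fun_cong[OF e_at_x_mult_tau, of "leaf Y"]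
  by (simp add: ser_mult_leaf e_at_x_None tau_None ds_at0_def ydeg_def e_at_x_plus_y_leaf_Y)

text \<open>Setting y = 0 in e(x) \<tau>(y) = d/ds e(x + s y) gives e(x) \<tau>(0) = 0.\<close>
lemma tau_ydeg_0: "ydeg w = 0 \<Longrightarrow> tau e w = 0"
proof -
  have "subst (var(Y := \<lambda>_. 0)) (e_at_x e) = e_at_x e"
    by (rule ext) (simp add: subst_y_zero e_at_x_ydeg_pos)
  moreover have "subst (var(Y := \<lambda>_. 0)) (ds_at0 (e_at_x_plus_y e)) = (\<lambda>_. 0 :: 'a)"
    by (rule ext) (simp add: subst_y_zero ds_at0_def)
  ultimately have "ser_mult (e_at_x e) (subst (var(Y := \<lambda>_. 0)) (tau e)) = (\<lambda>_. 0)"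
    using arg_cong[OF e_at_x_mult_tau, of "subst (var(Y := \<lambda>_. 0))"]
    by (simp add: subst_ser_mult[OF const_free_fun_upd[OF const_free_var]])
  then have "subst (var(Y := \<lambda>_. 0)) (tau e) w = 0"
    by (rule left_cancel_ser_mult[where f = "e_at_x e", OF e_at_x_None])
  then show "ydeg w = 0 \<Longrightarrow> tau e w = 0" by (simp add: subst_y_zero)
qed

lemma tau_inv_None: "tau_inv e None = 0"
  using tau_inv_spec[OF tau_None tau_leaf_Y] by blast

lemma subst_tau_inv: "subst (var(Y := tau_inv e)) (tau e) = var Y"
  using tau_inv_spec[OF tau_None tau_leaf_Y] by blast

lemma const_free_tau_inv: "const_free (var(Y := tau_inv e))"
  by (rule const_free_fun_upd[where T = "tau_inv e", OF const_free_var tau_inv_None])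

text \<open>Setting y = 0 in the equation defining the inverse of \<tau> leaves an equation that 0 also solves.\<close>
lemma tau_inv_ydeg_0: "ydeg w = 0 \<Longrightarrow> tau_inv e w = 0"
proof -
  define T0 where "T0 = subst (var(Y := \<lambda>_. 0)) (tau_inv e)"
  have T0_None: "T0 None = 0" by (simp add: T0_def subst_y_zero tau_inv_None)
  have cz: "const_free (var(Y := \<lambda>_. 0) :: xy \<Rightarrow> (xy, 'a) ser)"
    by (rule const_free_fun_upd[OF const_free_var]) simp
  have comp: "(\<lambda>v. subst (var(Y := \<lambda>_. 0)) ((var(Y := tau_inv e)) v)) = var(Y := T0)"
    by (rule ext) (simp add: T0_def subst_var[OF cz])
  have "subst (var(Y := T0)) (tau e) = subst (var(Y := \<lambda>_. 0)) (subst (var(Y := tau_inv e)) (tau e))"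
    by (simp only: subst_comp[OF cz const_free_tau_inv] comp)
  also have "\<dots> = subst (var(Y := \<lambda>_. 0)) (var Y :: (xy, 'a) ser)"
    by (simp only: subst_tau_inv)
  also have "\<dots> = (\<lambda>_. 0)" by (simp add: subst_var[OF cz])
  also have "\<dots> = subst (var(Y := \<lambda>_. 0)) (tau e)"
    by (rule ext) (simp add: subst_y_zero tau_ydeg_0)
  finally have "T0 w = 0"
    using subst_fun_upd_unique_ydeg_le[where F="tau e" and c=Y and T=T0 and T'="\<lambda>_. 0" and K="ydeg w" and w=w,
        OF const_free_var tau_leaf_Y T0_None]
    by simp
  then show "ydeg w = 0 \<Longrightarrow> tau_inv e w = 0" by (simp add: T0_def subst_y_zero)
qed


lemma apply_base_x_plus_tau_inv:
  assumes "ydeg w \<le> 1"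
  shows "apply_base e (\<lambda>w. var X w + tau_inv e w) w = e_at_x e w + ser_mult (e_at_x e) (var Y) w"
proof -
  let ?\<sigma> = "var(Y := tau_inv e)"
  define R where "R w = (if 2 \<le> ydeg w then e_at_x_plus_y e w else 0)" for w
  have split: "e_at_x_plus_y e = (\<lambda>w. e_at_x e w + (ds_at0 (e_at_x_plus_y e) w + R w))"
  proof
    fix w
    show "e_at_x_plus_y e w = e_at_x e w + (ds_at0 (e_at_x_plus_y e) w + R w)"
      by (cases "ydeg w = 0") (auto simp: e_at_x_plus_y_ydeg_0 e_at_x_ydeg_pos R_def ds_at0_def)
  qed
  have subst_x: "subst ?\<sigma> (e_at_x e) = e_at_x e"
    by (simp add: subst_apply_base[OF const_free_tau_inv] subst_var[OF const_free_tau_inv])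
  have subst_lin: "subst ?\<sigma> (ds_at0 (e_at_x_plus_y e)) = ser_mult (e_at_x e) (var Y)"
    unfolding e_at_x_mult_tau[symmetric] subst_ser_mult[OF const_free_tau_inv] subst_x subst_tau_inv ..
  have subst_R: "subst ?\<sigma> R w = 0"
  proof (rule subst_ydeg_vanish)
    show "ydeg_tree (MLeaf v) \<le> ydeg w'" if "?\<sigma> v w' \<noteq> 0" for v w'
      using that tau_inv_ydeg_0[of w'] by (cases v) (auto simp: Suc_le_eq)
    show "R m = 0" if "ydeg m \<le> ydeg w" for m
      using that assms by (simp add: R_def)
  qed
  have "apply_base e (\<lambda>w. var X w + tau_inv e w) = subst ?\<sigma> (e_at_x_plus_y e)"
    by (simp add: subst_apply_base[OF const_free_tau_inv] subst_add subst_var[OF const_free_tau_inv])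
  also have "\<dots> = (\<lambda>w. subst ?\<sigma> (e_at_x e) w + (subst ?\<sigma> (ds_at0 (e_at_x_plus_y e)) w + subst ?\<sigma> R w))"
    by (subst split) (simp add: subst_add)
  finally show ?thesis by (simp add: subst_x subst_lin subst_R)
qed

lemma e_at_y_ydeg_le_1:
  assumes "ydeg w \<le> 1"
  shows "apply_base e (var Y) w = mon None w + var Y w"
proof (cases "w \<in> range (rename (\<lambda>_ :: unit. Y))")
  case True
  then obtain m :: "unit mon" where m: "w = rename (\<lambda>_. Y) m" by blast
  then have "m = None \<or> m = leaf ()" using assms unit_mon_deg_le_1 by simp
  then show ?thesis
    using subst_var_rename_at_rename[of "\<lambda>_. Y" e m] m
    by (auto simp: apply_base_def inj_def e_None e_leaf var_def mon_def rename_def)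
next
  case False
  then have "w \<noteq> None" "w \<noteq> leaf Y"
    by (auto simp: rename_def intro: range_eqI[of _ _ None] range_eqI[of _ _ "leaf ()"])
  then show ?thesis
    using subst_var_rename_outside_range[OF False, of e] by (simp add: apply_base_def var_def mon_def)
qed

lemma e_at_x_mult_e_at_y:
  assumes "ydeg w \<le> 1"
  shows "ser_mult (e_at_x e) (apply_base e (var Y)) w = e_at_x e w + ser_mult (e_at_x e) (var Y) w"
proof -
  have "ser_mult (e_at_x e) (apply_base e (var Y)) w = ser_mult (e_at_x e) (\<lambda>w. mon None w + var Y w) w"
    by (rule ser_mult_cong_ydeg_le_1[OF e_at_y_ydeg_le_1 assms])
  then show ?thesis by (simp add: ser_mult_add_right)
qed

end

theorem mainTheorem5:
  fixes e :: "(unit, 'a::field_char_0) ser"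
  assumes "normalized_base e"
  shows "O_y2 (\<lambda>w. log_base e (ser_mult (apply_base e (var X)) (apply_base e (var Y))) w
                  - var X w - tau_inv e w)"
proof -
  let ?f = "ser_mult (e_at_x e) (apply_base e (var Y))"
  let ?L = "log_base e ?f"
  have "?f None = 1"
    by (simp add: ser_mult_None e_at_x_None[OF assms] apply_base_None e_None[OF assms])
  then have L: "?L None = 0" "apply_base e ?L = ?f"
    using log_base_spec[OF e_None[OF assms] e_leaf[OF assms]] by auto
  have "?L w = var X w + tau_inv e w" if "ydeg w \<le> 1" for w
  proof (rule apply_base_unique_ydeg_le[where e=e and u="?L" and u'="\<lambda>w. var X w + tau_inv e w",
        OF e_leaf[OF assms] L(1) _ _ that])
    show "var X None + tau_inv e None = 0" by (simp add: tau_inv_None[OF assms])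
    fix w :: "xy mon" assume "ydeg w \<le> 1"
    then show "apply_base e ?L w = apply_base e (\<lambda>w. var X w + tau_inv e w) w"
      by (simp add: L(2) e_at_x_mult_e_at_y[OF assms] apply_base_x_plus_tau_inv[OF assms])
  qed
  then show ?thesis by (simp add: O_y2_def)
qed

end
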